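(* Consider the abstract problem $u'(t)=Au(t)+f(t)$, $0\le t\le T$, $u(0)=u_0$, $\partial u(t)=g(t)$ with $g\equiv 0$, together with the space semidiscretization $U_h'(t)=A_{h,0}U_h(t)+L_hf(t)$, $U_h(0)=L_hu(0)$, and its time integration by the exponential quadrature rule with $s$ nodes $$U_h^{n+1}=e^{kA_{h,0}}U_h^n+k\sum_{i,j=1}^s a_{i,j}\varphi_j(kA_{h,0})L_hf(t_n+c_ik),\qquad t_n=nk.$$ Let $\bar U_h^{n+1}$ be the result of one step of this scheme started from $U_h(t_n)$ instead of $U_h^n$, and set $\rho_{h,n+1}=U_h(t_{n+1})-\bar U_h^{n+1}$, $e_{h,n}=U_h(t_n)-U_h^n$. If $u\in C([0,T],Z)$ and $f\in C^s([0,T],X)$, then (i) $\rho_{h,n}=O(k^{s+1})$; (ii) $e_{h,n}=O(k^s)$; (iii) $L_hu(t_n)-U_h^n=O(k^s+\varepsilon_h)$, where the constants in the Landau notation are independent of $k$ and $h$ (norms being $\|\cdot\|_h$).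
   Context: $X$, $Y$ are complex Banach spaces, $A:D(A)\subset X\to X$ linear with $D(A)$ dense, $\partial:D(A)\to Y$ linear. Standing assumptions: (A1) $\partial$ is onto; (A2) $\mathrm{Ker}(\partial)$ is dense in $X$ and $A_0$, the restriction of $A$ to $D(A_0)=\mathrm{Ker}(\partial)$, generates a $C_0$-semigroup $e^{tA_0}$ of negative type $\omega$; (A3) for $\mathrm{Re}\,z>\omega$ and $v\in Y$ the problem $Ax=zx$, $\partial x=v$ has a unique solution $x=K(z)v$ with $\|K(z)v\|_X\le L\|v\|_Y$ uniformly for $\mathrm{Re}\,z>\omega_0>\omega$. The functions $\varphi_j$ are $\varphi_0(z)=e^z$, $\varphi_j(tB)=t^{-j}\int_0^te^{(t-\tau)B}\tau^{j-1}/(j-1)!\,d\tau$ ($j\ge1$). Given distinct nodes $c_1,\dots,c_s$, the coefficients $a_{i,j}$ are defined by writing the Lagrange basis polynomials as $l_i(\theta)=\sum_{j=1}^s a_{i,j}\theta^{j-1}/(j-1)!$. Space discretization: for $h$ in a sequence tending to $0$, $X_h\subset X$ is finite-dimensional with norm $\|\cdot\|_h$, $X_{h,0}\subset X_h$ a subspace; $A_{h,0}$ approximates $A_0$ on $X_{h,0}$, $A_h$ approximates $A$; $L_h:X\to X_{h,0}$ is a projection, $Q_h:Y\to X_h$, and for the elliptic problem $Aw=F$, $\partial w=g$ the elliptic projection $R_hw\in X_{h,0}$ satisfies $A_{h,0}R_hw+A_hQ_hg=L_hF$; $P_h=L_h-L_hQ_h\partial$. $Z\subset X$ is a subspace with norm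 $\|\cdot\|_Z$ and $\|A_{h,0}(R_h-P_h)u\|_h\le\varepsilon_h\|u\|_Z$ for $u\in Z$, with $\varepsilon_h$ decreasing with $h$. The operators $e^{tA_{h,0}}$ ($t\ge0$), $L_h$, $L_hQ_h$, $P_h$ are bounded uniformly in $h$ (part of the paper's standing spatial-discretization hypotheses). *)

theory Defs
  imports "HOL-Analysis.Analysis" "HOL-Computational_Algebra.Polynomial"
begin

text \<open>HOL has no class of complex vector spaces; we add complex scalar multiplication
  compatible with the real structure and the norm, on top of real Banach spaces.\<close>
class complex_banach = banach +
  fixes scaleC :: "complex \<Rightarrow> 'a \<Rightarrow> 'a"
  assumes scaleC_add_right: "scaleC a (x + y) = scaleC a x + scaleC a y"
    and scaleC_add_left: "scaleC (a + b) x = scaleC a x + scaleC b x"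
    and scaleC_scaleC: "scaleC a (scaleC b x) = scaleC (a * b) x"
    and scaleC_one: "scaleC 1 x = x"
    and scaleC_of_real: "scaleC (of_real r) x = scaleR r x"
    and norm_scaleC: "norm (scaleC a x) = cmod a * norm x"

definition csubspace_on :: "'a::complex_banach set \<Rightarrow> bool" where
  "csubspace_on S \<longleftrightarrow> 0 \<in> S \<and> (\<forall>x\<in>S. \<forall>y\<in>S. x + y \<in> S)
      \<and> (\<forall>c::complex. \<forall>x\<in>S. scaleC c x \<in> S)"

definition clinear_on :: "'a::complex_banach set \<Rightarrow> ('a \<Rightarrow> 'b::complex_banach) \<Rightarrow> bool" where
  "clinear_on S f \<longleftrightarrow> csubspace_on S \<and> (\<forall>x\<in>S. \<forall>y\<in>S. f (x + y) = f x + f y)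
      \<and> (\<forall>c::complex. \<forall>x\<in>S. f (scaleC c x) = scaleC c (f x))"

definition is_norm_on :: "'a::complex_banach set \<Rightarrow> ('a \<Rightarrow> real) \<Rightarrow> bool" where
  "is_norm_on S N \<longleftrightarrow> csubspace_on S \<and> (\<forall>x\<in>S. 0 \<le> N x \<and> (N x = 0 \<longleftrightarrow> x = 0))
      \<and> (\<forall>x\<in>S. \<forall>y\<in>S. N (x + y) \<le> N x + N y)
      \<and> (\<forall>c::complex. \<forall>x\<in>S. N (scaleC c x) = cmod c * N x)"

definition generates_C0_semigroup ::
  "('a::complex_banach \<Rightarrow> 'a) \<Rightarrow> 'a set \<Rightarrow> real \<Rightarrow> (real \<Rightarrow> 'a \<Rightarrow> 'a) \<Rightarrow> bool" where
  "generates_C0_semigroup A0 D0 \<omega> S \<longleftrightarrow>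
     (\<forall>t\<ge>0. bounded_linear (S t) \<and> (\<forall>c::complex. \<forall>x. S t (scaleC c x) = scaleC c (S t x)))
   \<and> S 0 = id
   \<and> (\<forall>t\<ge>0. \<forall>r\<ge>0. S (t + r) = S t \<circ> S r)
   \<and> (\<forall>x. continuous_on {0..} (\<lambda>t. S t x))
   \<and> (\<exists>M. \<forall>t\<ge>0. onorm (S t) \<le> M * exp (\<omega> * t))
   \<and> (\<forall>x. x \<in> D0 \<longleftrightarrow> (\<exists>y. ((\<lambda>t. (1 / t) *\<^sub>R (S t x - x)) \<longlongrightarrow> y) (at_right 0)))
   \<and> (\<forall>x\<in>D0. ((\<lambda>t. (1 / t) *\<^sub>R (S t x - x)) \<longlongrightarrow> A0 x) (at_right 0))"

definition standing_assumptions ::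
  "('x::complex_banach \<Rightarrow> 'x) \<Rightarrow> 'x set \<Rightarrow> ('x \<Rightarrow> 'y::complex_banach)
   \<Rightarrow> real \<Rightarrow> bool" where
  "standing_assumptions A D bd \<omega> \<longleftrightarrow>
     clinear_on D A \<and> clinear_on D bd \<and> closure D = UNIV
   \<comment> \<open>(A1)\<close>
   \<and> bd ` D = UNIV
   \<comment> \<open>(A2)\<close>
   \<and> closure {x\<in>D. bd x = 0} = UNIV \<and> \<omega> < 0
   \<and> (\<exists>S. generates_C0_semigroup A {x\<in>D. bd x = 0} \<omega> S)
   \<comment> \<open>(A3)\<close>
   \<and> (\<forall>z v. Re z > \<omega> \<longrightarrow> (\<exists>!x. x \<in> D \<and> A x = scaleC z x \<and> bd x = v))
   \<and> (\<exists>\<omega>0 L. \<omega>0 > \<omega> \<and> (\<forall>z v x. Re z > \<omega>0 \<longrightarrow> x \<in> D \<longrightarrow> A x = scaleC z x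
          \<longrightarrow> bd x = v \<longrightarrow> norm x \<le> L * norm v))"

definition Ck_on :: "nat \<Rightarrow> real \<Rightarrow> (real \<Rightarrow> 'a::real_normed_vector) \<Rightarrow> bool" where
  "Ck_on k T f \<longleftrightarrow> (\<exists>F. (\<forall>t\<in>{0..T}. F 0 t = f t)
     \<and> (\<forall>j<k. \<forall>t\<in>{0..T}. (F j has_vector_derivative F (Suc j) t) (at t within {0..T}))
     \<and> continuous_on {0..T} (F k))"

text \<open>e^{tB} x as the exponential series (B acts on a finite-dimensional invariant subspace).\<close>
definition opexp :: "('a::real_normed_vector \<Rightarrow> 'a) \<Rightarrow> real \<Rightarrow> 'a \<Rightarrow> 'a" where
  "opexp B t x = (\<Sum>n. (t ^ n / fact n) *\<^sub>R (B ^^ n) x)"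

definition phi :: "nat \<Rightarrow> ('a::real_normed_vector \<Rightarrow> 'a) \<Rightarrow> real \<Rightarrow> 'a \<Rightarrow> 'a" where
  "phi j B t x = (if j = 0 then opexp B t x
     else (1 / t ^ j) *\<^sub>R integral {0..t} (\<lambda>\<tau>. (\<tau> ^ (j - 1) / fact (j - 1)) *\<^sub>R opexp B (t - \<tau>) x))"

definition lagrange_basis :: "(nat \<Rightarrow> real) \<Rightarrow> nat \<Rightarrow> nat \<Rightarrow> real poly" where
  "lagrange_basis c s i = smult (1 / (\<Prod>m\<in>{1..s} - {i}. (c i - c m))) (\<Prod>m\<in>{1..s} - {i}. [:- c m, 1:])"

text \<open>l_i(\<theta>) = \<Sum>_j a_{i,j} \<theta>^{j-1}/(j-1)!\<close>
definition quad_coeff :: "(nat \<Rightarrow> real) \<Rightarrow> nat \<Rightarrow> nat \<Rightarrow> nat \<Rightarrow> real" where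
  "quad_coeff c s i j = fact (j - 1) * coeff (lagrange_basis c s i) (j - 1)"

definition eq_step :: "('a::real_normed_vector \<Rightarrow> 'a) \<Rightarrow> ('b \<Rightarrow> 'a) \<Rightarrow> (real \<Rightarrow> 'b)
    \<Rightarrow> (nat \<Rightarrow> real) \<Rightarrow> nat \<Rightarrow> real \<Rightarrow> real \<Rightarrow> 'a \<Rightarrow> 'a" where
  "eq_step B L f c s k t x = opexp B k x
     + k *\<^sub>R (\<Sum>i\<in>{1..s}. \<Sum>j\<in>{1..s}. quad_coeff c s i j *\<^sub>R phi j B k (L (f (t + c i * k))))"

primrec eq_iter :: "('a::real_normed_vector \<Rightarrow> 'a) \<Rightarrow> ('b \<Rightarrow> 'a) \<Rightarrow> (real \<Rightarrow> 'b)
    \<Rightarrow> (nat \<Rightarrow> real) \<Rightarrow> nat \<Rightarrow> real \<Rightarrow> 'a \<Rightarrow> nat \<Rightarrow> 'a" where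
  "eq_iter B L f c s k U0 0 = U0"
| "eq_iter B L f c s k U0 (Suc n) = eq_step B L f c s k (real n * k) (eq_iter B L f c s k U0 n)"

end

(* On a fixed finite-dimensional discrete space the semidiscrete problem U' = B U + L f has a
   bounded generator B, so e^{tB} is the exponential series and the variation-of-constants formula
   holds. Subtracting one quadrature step from it, the local error becomes the integral of
   e^{(k-r)B} L w(r), where w is the error of interpolating f at the nodes t_n + c_i k by the
   Lagrange polynomials l_i; Taylor's formula makes w = O(k^s), hence rho = O(k^(s+1)).
   The global error obeys e_(n+1) = e^{kB} e_n + rho_(n+1), and the uniform bound on e^{tB}
   sums the n <= T/k local errors to O(k^s). Finally L u - U_h solves the semidiscrete equation
   with the defect B (R u - L u) of the elliptic projection, which is O(eps_h), and the
   uniform bound on e^{tB} again transports it. Every constant depends only on the uniform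
   bounds, the nodes and f, never on h; finite dimensionality of X_h is used only to know that
   B is bounded and that the discrete norm is dominated by the norm of X. *)

theory Submission
  imports Defs
begin

section \<open>Finite-dimensional subspaces of a Banach space\<close>

definition coeff_bound :: "'a::real_normed_vector set \<Rightarrow> real \<Rightarrow> bool" where
  "coeff_bound b c \<longleftrightarrow> (\<forall>a. (\<Sum>v\<in>b. \<bar>a v\<bar>) \<le> c * norm (\<Sum>v\<in>b. a v *\<^sub>R v))"

lemma coeff_bound_nonneg: "coeff_bound b c \<Longrightarrow> coeff_bound b (max c 0)"
  unfolding coeff_bound_def
  by (metis (no_types, lifting) max.cobounded1 mult_right_mono norm_ge_zero order_trans)

lemma coeff_bound_coeff_Cauchy:
  assumes b: "finite b" "coeff_bound b c" and v: "v \<in> b"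
    and x: "Cauchy (\<lambda>n. \<Sum>w\<in>b. a n w *\<^sub>R w)"
  shows "Cauchy (\<lambda>n. a n v)"
proof (rule metric_CauchyI)
  fix e :: real assume "e > 0"
  define c' where "c' = max c 0"
  have cb: "coeff_bound b c'" using coeff_bound_nonneg[OF b(2)] by (simp add: c'_def)
  have "e / (c' + 1) > 0" using \<open>e > 0\<close> by (simp add: c'_def)
  then obtain M where M: "\<And>m n. m \<ge> M \<Longrightarrow> n \<ge> M \<Longrightarrow>
      dist (\<Sum>w\<in>b. a m w *\<^sub>R w) (\<Sum>w\<in>b. a n w *\<^sub>R w) < e / (c' + 1)"
    using x metric_CauchyD by blast
  have "dist (a m v) (a n v) < e" if "m \<ge> M" "n \<ge> M" for m n
  proof -
    have "dist (a m v) (a n v) = \<bar>a m v - a n v\<bar>" by (simp add: dist_real_def)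
    also have "\<dots> \<le> (\<Sum>w\<in>b. \<bar>a m w - a n w\<bar>)"
      using b v by (intro member_le_sum) auto
    also have "\<dots> \<le> c' * norm (\<Sum>w\<in>b. (a m w - a n w) *\<^sub>R w)"
      using cb[unfolded coeff_bound_def, rule_format, of "\<lambda>w. a m w - a n w"] by simp
    also have "\<dots> = c' * dist (\<Sum>w\<in>b. a m w *\<^sub>R w) (\<Sum>w\<in>b. a n w *\<^sub>R w)"
      by (simp add: dist_norm scaleR_diff_left sum_subtractf)
    also have "\<dots> \<le> c' * (e / (c' + 1))"
      using M[OF that] by (intro mult_left_mono) (auto simp: c'_def)
    also have "\<dots> < e" using \<open>e > 0\<close> by (simp add: c'_def field_simps)
    finally show ?thesis .
  qed
  then show "\<exists>M. \<forall>m\<ge>M. \<forall>n\<ge>M. dist (a m v) (a n v) < e" by blast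
qed

lemma closed_span_if_coeff_bound:
  fixes b :: "'a::banach set"
  assumes fin: "finite b" and cb: "coeff_bound b c"
  shows "closed (span b)"
  unfolding closed_sequential_limits
proof (intro allI impI)
  fix x l assume xl: "(\<forall>n. x n \<in> span b) \<and> x \<longlonglongrightarrow> l"
  then have "\<forall>n. \<exists>a. x n = (\<Sum>v\<in>b. a v *\<^sub>R v)" using span_finite[OF fin] by auto
  then obtain a where a: "\<And>n. x n = (\<Sum>v\<in>b. a n v *\<^sub>R v)" by metis
  have "x = (\<lambda>n. \<Sum>v\<in>b. a n v *\<^sub>R v)" by (rule ext) (rule a)
  moreover have "Cauchy x" using xl convergent_Cauchy convergent_def by blast
  ultimately have "Cauchy (\<lambda>n. \<Sum>v\<in>b. a n v *\<^sub>R v)" by simp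
  then have "convergent (\<lambda>n. a n v)" if "v \<in> b" for v
    using coeff_bound_coeff_Cauchy[OF fin cb that] Cauchy_convergent_iff by blast
  then have "(\<lambda>n. \<Sum>v\<in>b. a n v *\<^sub>R v) \<longlonglongrightarrow> (\<Sum>v\<in>b. lim (\<lambda>n. a n v) *\<^sub>R v)"
    by (intro tendsto_sum tendsto_scaleR) (auto simp: convergent_LIMSEQ_iff)
  then have "l = (\<Sum>v\<in>b. lim (\<lambda>n. a n v) *\<^sub>R v)"
    using xl \<open>x = _\<close> LIMSEQ_unique by blast
  then show "l \<in> span b" using span_finite[OF fin] by auto
qed

text \<open>Induction on the basis: the coefficient of a new vector w is controlled by the distance
  from w to the span of the others, which is positive because that span is already closed.\<close>
lemma coeff_bound_exists:
  fixes b :: "'a::banach set"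
  assumes "finite b" "independent b"
  shows "\<exists>c\<ge>0. coeff_bound b c"
  using assms
proof (induction b rule: finite_induct)
  case empty
  then show ?case by (auto simp: coeff_bound_def)
next
  case (insert w b)
  have ib: "independent b" and wn: "w \<notin> span b"
    using insert.prems insert.hyps by (auto simp: independent_insert)
  obtain c where c0: "c \<ge> 0" and cb: "coeff_bound b c"
    using insert.IH[OF ib] by blast
  define d where "d = infdist w (span b)"
  have dpos: "d > 0" unfolding d_def
    using closed_span_if_coeff_bound[OF insert.hyps(1) cb] wn span_zero
    by (intro infdist_pos_not_in_closed) auto
  have "(\<Sum>v\<in>insert w b. \<bar>a v\<bar>) \<le> (1 / d + c * (1 + norm w / d)) * norm (\<Sum>v\<in>insert w b. a v *\<^sub>R v)"
    for a
  proof -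
    define y where "y = (\<Sum>v\<in>b. a v *\<^sub>R v)"
    define x where "x = (\<Sum>v\<in>insert w b. a v *\<^sub>R v)"
    have xy: "x = a w *\<^sub>R w + y" unfolding x_def y_def using insert.hyps by simp
    have aw: "\<bar>a w\<bar> \<le> norm x / d"
    proof (cases "a w = 0")
      case False
      have "- (1 / a w) *\<^sub>R y \<in> span b" unfolding y_def
        by (intro span_scale span_neg span_sum span_base) auto
      then have "d \<le> dist w (- (1 / a w) *\<^sub>R y)" unfolding d_def by (rule infdist_le)
      also have "\<dots> = norm ((1 / a w) *\<^sub>R x)"
        using False by (simp add: dist_norm xy scaleR_add_right)
      also have "\<dots> = norm x / \<bar>a w\<bar>" by simp
      finally show ?thesis using False dpos by (simp add: field_simps)
    qed (use dpos in simp)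
    have "norm y \<le> norm x + \<bar>a w\<bar> * norm w"
      using norm_triangle_ineq4[of x "a w *\<^sub>R w"] by (simp add: xy)
    also have "\<dots> \<le> norm x + norm x / d * norm w"
      using aw by (intro add_left_mono mult_right_mono) auto
    finally have ny: "norm y \<le> norm x * (1 + norm w / d)" by (simp add: algebra_simps)
    have "(\<Sum>v\<in>insert w b. \<bar>a v\<bar>) = \<bar>a w\<bar> + (\<Sum>v\<in>b. \<bar>a v\<bar>)" using insert.hyps by simp
    also have "\<dots> \<le> norm x / d + c * norm y"
      using aw cb unfolding coeff_bound_def y_def by (intro add_mono) auto
    also have "\<dots> \<le> norm x / d + c * (norm x * (1 + norm w / d))"
      using ny c0 by (simp add: mult_left_mono)
    finally show ?thesis unfolding x_def by (simp add: field_simps)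
  qed
  moreover have "1 / d + c * (1 + norm w / d) \<ge> 0" using dpos c0 by simp
  ultimately show ?case unfolding coeff_bound_def by blast
qed

lemma finite_dim_subspace_obtain_basis:
  fixes V :: "'a::banach set"
  assumes "subspace V" "finite B0" "V \<subseteq> span B0"
  obtains b c where "finite b" "V = span b" "coeff_bound b c" "c \<ge> 0"
proof -
  obtain b where b: "b \<subseteq> V" "independent b" "V \<subseteq> span b" by (rule maximal_independent_subset)
  have fb: "finite b"
    using b assms independent_span_bound[OF assms(2) b(2)] by auto
  have "V = span b" using b span_minimal[OF b(1) assms(1)] by auto
  then show ?thesis using that fb coeff_bound_exists[OF fb b(2)] by blast
qed

lemma closed_finite_dim_subspace:
  fixes V :: "'a::banach set"
  assumes "subspace V" "finite B0" "V \<subseteq> span B0"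
  shows "closed V"
  using finite_dim_subspace_obtain_basis[OF assms] closed_span_if_coeff_bound by metis

lemma finite_dim_subadditive_bound:
  fixes V :: "'a::banach set" and N :: "'a \<Rightarrow> real"
  assumes V: "subspace V" "finite B0" "V \<subseteq> span B0"
    and add: "\<And>x y. x \<in> V \<Longrightarrow> y \<in> V \<Longrightarrow> N (x + y) \<le> N x + N y"
    and hom: "\<And>r x. x \<in> V \<Longrightarrow> N (r *\<^sub>R x) = \<bar>r\<bar> * N x"
  shows "\<exists>K\<ge>0. \<forall>x\<in>V. N x \<le> K * norm x"
proof -
  obtain b c where b: "finite b" "V = span b" "coeff_bound b c" "c \<ge> 0"
    using finite_dim_subspace_obtain_basis[OF V] by blast
  define M where "M = (\<Sum>v\<in>b. \<bar>N v\<bar>)"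
  have sum_le: "N (\<Sum>v\<in>S. a v *\<^sub>R v) \<le> (\<Sum>v\<in>S. \<bar>a v\<bar> * N v)" if "finite S" "S \<subseteq> V" for S a
    using that
  proof (induction S rule: finite_induct)
    case empty
    show ?case using hom[of 0 0] subspace_0[OF V(1)] by simp
  next
    case (insert w S)
    have "(\<Sum>v\<in>S. a v *\<^sub>R v) \<in> V" "a w *\<^sub>R w \<in> V"
      using insert V(1) by (auto intro: subspace_sum subspace_scale)
    then have "N (\<Sum>v\<in>insert w S. a v *\<^sub>R v) \<le> N (a w *\<^sub>R w) + N (\<Sum>v\<in>S. a v *\<^sub>R v)"
      using insert.hyps add by simp
    then show ?case using insert hom[of w "a w"] by simp
  qed
  have "N x \<le> (M * c) * norm x" if "x \<in> V" for x
  proof -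
    obtain a where xa: "x = (\<Sum>v\<in>b. a v *\<^sub>R v)" using \<open>x \<in> V\<close> b span_finite by blast
    have "b \<subseteq> V" using b(2) span_superset by blast
    then have "N x \<le> (\<Sum>v\<in>b. \<bar>a v\<bar> * N v)" using sum_le[OF b(1)] xa by blast
    also have "\<dots> \<le> (\<Sum>v\<in>b. (\<Sum>w\<in>b. \<bar>a w\<bar>) * \<bar>N v\<bar>)"
    proof (rule sum_mono)
      fix v assume "v \<in> b"
      have "\<bar>a v\<bar> \<le> (\<Sum>w\<in>b. \<bar>a w\<bar>)" using b(1) \<open>v \<in> b\<close> by (intro member_le_sum) auto
      have "\<bar>a v\<bar> * N v \<le> \<bar>a v\<bar> * \<bar>N v\<bar>" by (intro mult_left_mono) auto
      also have "\<dots> \<le> (\<Sum>w\<in>b. \<bar>a w\<bar>) * \<bar>N v\<bar>"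
        using \<open>\<bar>a v\<bar> \<le> _\<close> by (intro mult_right_mono) auto
      finally show "\<bar>a v\<bar> * N v \<le> (\<Sum>w\<in>b. \<bar>a w\<bar>) * \<bar>N v\<bar>" .
    qed
    also have "\<dots> = (\<Sum>w\<in>b. \<bar>a w\<bar>) * M" by (simp add: M_def sum_distrib_left)
    also have "\<dots> \<le> (c * norm x) * M"
      using b(3) unfolding coeff_bound_def xa M_def by (intro mult_right_mono sum_nonneg) auto
    finally show ?thesis by (simp add: algebra_simps)
  qed
  moreover have "M * c \<ge> 0" using b(4) by (simp add: M_def sum_nonneg)
  ultimately show ?thesis by blast
qed

lemma finite_dim_linear_bound:
  fixes V :: "'a::banach set" and T :: "'a \<Rightarrow> 'b::real_normed_vector"
  assumes "subspace V" "finite B0" "V \<subseteq> span B0"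
    and "\<And>x y. x \<in> V \<Longrightarrow> y \<in> V \<Longrightarrow> T (x + y) = T x + T y"
    and "\<And>r x. x \<in> V \<Longrightarrow> T (r *\<^sub>R x) = r *\<^sub>R T x"
  shows "\<exists>K\<ge>0. \<forall>x\<in>V. norm (T x) \<le> K * norm x"
  using assms by (intro finite_dim_subadditive_bound[of V B0 "\<lambda>x. norm (T x)"])
    (auto simp: norm_triangle_ineq)

section \<open>Exponential of a bounded operator on an invariant subspace\<close>

lemma summable_exp_bound:
  fixes K M :: real
  shows "summable (\<lambda>n. M * (R ^ n / fact n * K ^ n))"
proof -
  have "summable (\<lambda>n. inverse (fact n) * (R * K) ^ n)" by (rule summable_exp)
  then have "summable (\<lambda>n. (R * K) ^ n / fact n)" by (simp add: divide_inverse mult_ac)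
  then have "summable (\<lambda>n. M * ((R * K) ^ n / fact n))" by (rule summable_mult)
  then show ?thesis by (simp add: power_mult_distrib mult_ac)
qed

lemma summable_norm_exp_series:
  fixes v :: "nat \<Rightarrow> 'a::banach"
  assumes v: "\<And>n. norm (v n) \<le> M * K ^ n" and K: "K \<ge> 0"
  shows "summable (\<lambda>n. norm ((t ^ n / fact n) *\<^sub>R v n))"
proof (rule summable_comparison_test[OF _ summable_exp_bound[of M "\<bar>t\<bar>" K]])
  show "\<exists>N. \<forall>n\<ge>N. norm (norm ((t ^ n / fact n) *\<^sub>R v n)) \<le> M * (\<bar>t\<bar> ^ n / fact n * K ^ n)"
  proof (intro exI allI impI)
    fix n :: nat
    have "norm (norm ((t ^ n / fact n) *\<^sub>R v n)) = (\<bar>t\<bar> ^ n / fact n) * norm (v n)"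
      by (simp add: power_abs)
    also have "\<dots> \<le> (\<bar>t\<bar> ^ n / fact n) * (M * K ^ n)" by (intro mult_left_mono v) auto
    finally show "norm (norm ((t ^ n / fact n) *\<^sub>R v n)) \<le> M * (\<bar>t\<bar> ^ n / fact n * K ^ n)"
      by (simp add: mult_ac)
  qed
qed

lemma power_over_fact_has_vector_derivative:
  "((\<lambda>x. (x ^ Suc m / fact (Suc m)) *\<^sub>R v) has_vector_derivative (x ^ m / fact m) *\<^sub>R v)
     (at x within S)"
proof -
  have "((\<lambda>x. x ^ Suc m / fact (Suc m)) has_real_derivative
      (real (Suc m) * x ^ m / fact (Suc m))) (at x within S)"
    using DERIV_cdivide[OF DERIV_pow[of "Suc m" x S], of "fact (Suc m)"] by simp
  moreover have "real (Suc m) * x ^ m / fact (Suc m) = x ^ m / fact m"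
    by (simp only: fact_Suc) (simp del: of_nat_Suc)
  ultimately have "((\<lambda>x. x ^ Suc m / fact (Suc m)) has_vector_derivative x ^ m / fact m) (at x within S)"
    by (simp add: has_real_derivative_iff_has_vector_derivative)
  then show ?thesis
    by (rule bounded_linear.has_vector_derivative[OF bounded_linear_scaleR_left])
qed

lemma exp_series_uniform_limit:
  fixes v :: "nat \<Rightarrow> 'a::banach"
  assumes v: "\<And>n. norm (v n) \<le> M * K ^ n" and K: "K \<ge> 0"
  shows "uniform_limit (ball t 1) (\<lambda>n x. \<Sum>i<n. (x ^ i / fact i) *\<^sub>R v i)
           (\<lambda>x. \<Sum>n. (x ^ n / fact n) *\<^sub>R v n) sequentially"
proof (rule Weierstrass_m_test[OF _ summable_exp_bound[of M "\<bar>t\<bar> + 1" K]])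
  fix n x assume "x \<in> ball t 1"
  then have "\<bar>x\<bar> \<le> \<bar>t\<bar> + 1" by (auto simp: dist_real_def)
  have "norm ((x ^ n / fact n) *\<^sub>R v n) = (\<bar>x\<bar> ^ n / fact n) * norm (v n)"
    by (simp add: power_abs)
  also have "\<dots> \<le> ((\<bar>t\<bar> + 1) ^ n / fact n) * (M * K ^ n)"
    using \<open>\<bar>x\<bar> \<le> _\<close> v by (intro mult_mono divide_right_mono power_mono) auto
  finally show "norm ((x ^ n / fact n) *\<^sub>R v n) \<le> M * ((\<bar>t\<bar> + 1) ^ n / fact n * K ^ n)"
    by (simp add: mult_ac)
qed

lemma exp_series_has_vector_derivative:
  fixes v :: "nat \<Rightarrow> 'a::banach"
  assumes v: "\<And>n. norm (v n) \<le> M * K ^ n" and K: "K \<ge> 0"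
  shows "((\<lambda>t. \<Sum>n. (t ^ n / fact n) *\<^sub>R v n) has_vector_derivative
           (\<Sum>n. (t ^ n / fact n) *\<^sub>R v (Suc n))) (at t)"
proof -
  define S where "S = ball t 1"
  define f where "f n x = (x ^ n / fact n) *\<^sub>R v n" for n x
  define Q where "Q x = (\<Sum>n. (x ^ n / fact n) *\<^sub>R v (Suc n))" for x
  define f' where "f' n x = (\<lambda>h::real. h *\<^sub>R (if n = 0 then 0 else (x ^ (n - 1) / fact (n - 1)) *\<^sub>R v n))" for n x
  have v1: "norm (v (Suc n)) \<le> (M * K) * K ^ n" for n using v[of "Suc n"] by (simp add: mult_ac)
  have fd: "(f n has_derivative f' n x) (at x within S)" for n x
  proof (cases n)
    case (Suc m)
    with power_over_fact_has_vector_derivative[of m "v n" x S] show ?thesis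
      by (simp add: f_def[abs_def] f'_def has_vector_derivative_def)
  qed (simp add: f_def[abs_def] f'_def)
  have unif: "uniform_limit S (\<lambda>n x. \<Sum>i<n. (x ^ i / fact i) *\<^sub>R v (Suc i)) Q sequentially"
    unfolding S_def Q_def by (rule exp_series_uniform_limit[OF v1 K])
  have sumf': "(\<Sum>i<Suc n. f' i x h) = h *\<^sub>R (\<Sum>i<n. (x ^ i / fact i) *\<^sub>R v (Suc i))" for n x h
    unfolding f'_def by (simp add: sum.lessThan_Suc_shift scaleR_sum_right del: sum.lessThan_Suc)
  have "\<exists>g. \<forall>x\<in>S. (\<lambda>n. f n x) sums (g x) \<and> (g has_derivative (\<lambda>h. h *\<^sub>R Q x)) (at x within S)"
  proof (rule has_derivative_series[where f' = f'])
    show "convex S" by (simp add: S_def)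
    show "\<And>n x. x \<in> S \<Longrightarrow> (f n has_derivative f' n x) (at x within S)" by (rule fd)
    show "t \<in> S" by (simp add: S_def)
    show "(\<lambda>n. f n t) sums (\<Sum>n. f n t)"
      by (rule summable_sums, rule summable_norm_cancel, unfold f_def, rule summable_norm_exp_series[OF v K])
    fix e :: real assume "e > 0"
    then have "\<forall>\<^sub>F n in sequentially. \<forall>x\<in>S. dist (\<Sum>i<n. (x ^ i / fact i) *\<^sub>R v (Suc i)) (Q x) < e"
      using unif unfolding uniform_limit_iff by blast
    then obtain N where N: "\<And>n x. n \<ge> N \<Longrightarrow> x \<in> S \<Longrightarrow> dist (\<Sum>i<n. (x ^ i / fact i) *\<^sub>R v (Suc i)) (Q x) < e"
      unfolding eventually_sequentially by blast
    show "\<forall>\<^sub>F n in sequentially. \<forall>x\<in>S. \<forall>h. norm ((\<Sum>i<n. f' i x h) - h *\<^sub>R Q x) \<le> e * norm h"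
      unfolding eventually_sequentially
    proof (intro exI[of _ "Suc N"] allI impI ballI)
      fix n x h assume "Suc N \<le> n" "x \<in> S"
      then obtain m where m: "n = Suc m" "m \<ge> N" by (cases n) auto
      have "norm ((\<Sum>i<n. f' i x h) - h *\<^sub>R Q x) = \<bar>h\<bar> * norm ((\<Sum>i<m. (x ^ i / fact i) *\<^sub>R v (Suc i)) - Q x)"
        unfolding m sumf' by (simp add: scaleR_diff_right[symmetric])
      also have "\<dots> \<le> \<bar>h\<bar> * e" using N[OF m(2) \<open>x\<in>S\<close>] by (intro mult_left_mono) (auto simp: dist_norm)
      finally show "norm ((\<Sum>i<n. f' i x h) - h *\<^sub>R Q x) \<le> e * norm h" by (simp add: mult_ac)
    qed
  qed
  then obtain g where g: "\<And>x. x \<in> S \<Longrightarrow> (\<lambda>n. f n x) sums (g x) \<and> (g has_derivative (\<lambda>h. h *\<^sub>R Q x)) (at x within S)"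
    by blast
  have "t \<in> S" "open S" by (auto simp: S_def)
  have d: "(g has_derivative (\<lambda>h. h *\<^sub>R Q t)) (at t)"
    using g[OF \<open>t\<in>S\<close>] at_within_open[OF \<open>t\<in>S\<close> \<open>open S\<close>] by simp
  have eq: "g y = (\<Sum>n. (y ^ n / fact n) *\<^sub>R v n)" if "y \<in> S" for y
  proof -
    have "(\<lambda>n. f n y) sums g y" using g[OF that] by blast
    then have "g y = suminf (\<lambda>n. f n y)" by (rule sums_unique)
    then show ?thesis by (simp add: f_def)
  qed
  have "((\<lambda>y. \<Sum>n. (y ^ n / fact n) *\<^sub>R v n) has_derivative (\<lambda>h. h *\<^sub>R Q t)) (at t)"
    by (rule has_derivative_transform_within_open[OF d \<open>open S\<close> \<open>t\<in>S\<close>]) (rule eq)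
  then show ?thesis unfolding has_vector_derivative_def Q_def .
qed

lemma opexp_at_0: "opexp B 0 x = x"
proof -
  have "(\<lambda>n. (0 ^ n / fact n) *\<^sub>R (B ^^ n) x) = (\<lambda>n. if n = 0 then x else 0)"
    by (auto simp: power_0_left)
  then show ?thesis unfolding opexp_def by (simp add: sums_single[THEN sums_unique, symmetric])
qed

locale bounded_invariant_op =
  fixes V :: "'a::banach set" and B :: "'a \<Rightarrow> 'a" and K :: real
  assumes V_subspace: "subspace V" and V_closed: "closed V"
    and B_add: "\<And>x y. x \<in> V \<Longrightarrow> y \<in> V \<Longrightarrow> B (x + y) = B x + B y"
    and B_scaleR: "\<And>r x. x \<in> V \<Longrightarrow> B (r *\<^sub>R x) = r *\<^sub>R B x"
    and B_in: "\<And>x. x \<in> V \<Longrightarrow> B x \<in> V"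
    and K_nonneg: "K \<ge> 0" and norm_B_le: "\<And>x. x \<in> V \<Longrightarrow> norm (B x) \<le> K * norm x"
begin

lemma V_zero: "0 \<in> V" using V_subspace subspace_0 by blast
lemma V_add: "x \<in> V \<Longrightarrow> y \<in> V \<Longrightarrow> x + y \<in> V" using V_subspace subspace_add by blast
lemma V_scaleR: "x \<in> V \<Longrightarrow> r *\<^sub>R x \<in> V" using V_subspace subspace_scale by blast
lemma V_diff: "x \<in> V \<Longrightarrow> y \<in> V \<Longrightarrow> x - y \<in> V" using V_subspace subspace_diff by blast
lemma V_minus: "x \<in> V \<Longrightarrow> - x \<in> V" using V_subspace subspace_neg by blast
lemma V_sum: "finite S \<Longrightarrow> (\<And>i. i \<in> S \<Longrightarrow> f i \<in> V) \<Longrightarrow> sum f S \<in> V"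
  using V_subspace subspace_sum by blast

lemma B_zero: "B 0 = 0"
  using B_scaleR[of 0 0] V_zero by simp
lemma B_minus: "x \<in> V \<Longrightarrow> B (- x) = - B x"
  using B_scaleR[of x "-1"] by simp
lemma B_diff: "x \<in> V \<Longrightarrow> y \<in> V \<Longrightarrow> B (x - y) = B x - B y"
  using B_add[of x "- y"] B_minus[of y] V_minus by simp

lemma B_pow_in: "x \<in> V \<Longrightarrow> (B ^^ n) x \<in> V"
  by (induction n) (auto simp: B_in)
lemma B_pow_add: "x \<in> V \<Longrightarrow> y \<in> V \<Longrightarrow> (B ^^ n) (x + y) = (B ^^ n) x + (B ^^ n) y"
  by (induction n) (auto simp: B_add B_pow_in)
lemma B_pow_scaleR: "x \<in> V \<Longrightarrow> (B ^^ n) (r *\<^sub>R x) = r *\<^sub>R (B ^^ n) x"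
  by (induction n) (auto simp: B_scaleR B_pow_in)
lemma norm_B_pow_le: "x \<in> V \<Longrightarrow> norm ((B ^^ n) x) \<le> K ^ n * norm x"
proof (induction n)
  case 0 then show ?case by simp
next
  case (Suc n)
  have "norm ((B ^^ Suc n) x) = norm (B ((B ^^ n) x))" by simp
  also have "\<dots> \<le> K * norm ((B ^^ n) x)" using norm_B_le B_pow_in Suc.prems by blast
  also have "\<dots> \<le> K * (K ^ n * norm x)" using Suc K_nonneg by (intro mult_left_mono) auto
  finally show ?case by (simp add: mult_ac)
qed

lemma norm_B_pow_le': "x \<in> V \<Longrightarrow> norm ((B ^^ n) x) \<le> norm x * K ^ n"
  using norm_B_pow_le by (simp add: mult_ac)

lemma summable_norm_opexp_series: assumes x: "x \<in> V" shows "summable (\<lambda>n. norm ((t ^ n / fact n) *\<^sub>R (B ^^ n) x))"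
  by (rule summable_norm_exp_series[OF norm_B_pow_le'[OF x] K_nonneg])

lemma summable_opexp_series: "x \<in> V \<Longrightarrow> summable (\<lambda>n. (t ^ n / fact n) *\<^sub>R (B ^^ n) x)"
  by (rule summable_norm_cancel[OF summable_norm_opexp_series])

lemma suminf_in_V: "summable f \<Longrightarrow> (\<And>n. f n \<in> V) \<Longrightarrow> suminf f \<in> V"
proof -
  assume s: "summable f" and fv: "\<And>n. f n \<in> V"
  have "(\<lambda>N. \<Sum>n<N. f n) \<longlonglongrightarrow> suminf f" using s by (rule summable_LIMSEQ)
  moreover have "\<forall>N. (\<Sum>n<N. f n) \<in> V" using fv by (auto intro: V_sum)
  ultimately show "suminf f \<in> V"
    using V_closed[unfolded closed_sequential_limits, rule_format, of "\<lambda>N. \<Sum>n<N. f n" "suminf f"] by simp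
qed

lemma opexp_in: "x \<in> V \<Longrightarrow> opexp B t x \<in> V"
  unfolding opexp_def by (rule suminf_in_V[OF summable_opexp_series]) (auto intro: V_scaleR B_pow_in)

lemma norm_opexp_le: "x \<in> V \<Longrightarrow> norm (opexp B t x) \<le> exp (\<bar>t\<bar> * K) * norm x"
proof -
  assume x: "x \<in> V"
  have s2: "summable (\<lambda>n. norm x * ((\<bar>t\<bar> * K) ^ n / fact n))"
    using summable_exp_bound[of "norm x" "\<bar>t\<bar>" K] by (simp add: power_mult_distrib mult_ac)
  have "norm (opexp B t x) \<le> (\<Sum>n. norm ((t ^ n / fact n) *\<^sub>R (B ^^ n) x))"
    unfolding opexp_def by (rule summable_norm[OF summable_norm_opexp_series[OF x]])
  also have "\<dots> \<le> (\<Sum>n. norm x * ((\<bar>t\<bar> * K) ^ n / fact n))"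
  proof (rule suminf_le[OF _ summable_norm_opexp_series[OF x] s2])
    fix n
    have "norm ((t ^ n / fact n) *\<^sub>R (B ^^ n) x) = (\<bar>t\<bar> ^ n / fact n) * norm ((B ^^ n) x)"
      by (simp add: power_abs)
    also have "\<dots> \<le> (\<bar>t\<bar> ^ n / fact n) * (K ^ n * norm x)" using norm_B_pow_le[OF x] by (intro mult_left_mono) auto
    finally show "norm ((t ^ n / fact n) *\<^sub>R (B ^^ n) x) \<le> norm x * ((\<bar>t\<bar> * K) ^ n / fact n)"
      by (simp add: power_mult_distrib mult_ac)
  qed
  also have "\<dots> = norm x * exp (\<bar>t\<bar> * K)"
    using suminf_mult[OF summable_exp[of "\<bar>t\<bar> * K"], of "norm x"] by (simp add: exp_def divide_inverse mult_ac)
  finally show ?thesis by (simp add: mult_ac)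
qed

lemma opexp_add: "x \<in> V \<Longrightarrow> y \<in> V \<Longrightarrow> opexp B t (x + y) = opexp B t x + opexp B t y"
  unfolding opexp_def
  by (simp add: B_pow_add scaleR_add_right suminf_add[OF summable_opexp_series summable_opexp_series])

lemma opexp_scaleR: "x \<in> V \<Longrightarrow> opexp B t (r *\<^sub>R x) = r *\<^sub>R opexp B t x"
proof -
  assume x: "x \<in> V"
  have "opexp B t (r *\<^sub>R x) = (\<Sum>n. r *\<^sub>R ((t ^ n / fact n) *\<^sub>R (B ^^ n) x))"
    unfolding opexp_def using x by (simp add: B_pow_scaleR scaleR_scaleR mult_ac)
  also have "\<dots> = r *\<^sub>R opexp B t x"
    unfolding opexp_def by (rule suminf_scaleR_right[OF summable_opexp_series[OF x], symmetric])
  finally show ?thesis .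
qed

lemma opexp_minus: "x \<in> V \<Longrightarrow> opexp B t (- x) = - opexp B t x"
  using opexp_scaleR[where r="-1"] by simp
lemma opexp_diff: "x \<in> V \<Longrightarrow> y \<in> V \<Longrightarrow> opexp B t (x - y) = opexp B t x - opexp B t y"
  using opexp_add[of x "- y"] opexp_minus[of y] V_minus by simp
lemma opexp_zero: "opexp B t 0 = 0"
  using opexp_scaleR[where r=0 and x=0] V_zero by simp

lemma opexp_sum: "finite S \<Longrightarrow> (\<And>i. i \<in> S \<Longrightarrow> f i \<in> V) \<Longrightarrow> opexp B t (sum f S) = (\<Sum>i\<in>S. opexp B t (f i))"
proof (induction S rule: finite_induct)
  case empty then show ?case by (simp add: opexp_zero)
next
  case (insert a S)
  have "sum f S \<in> V" using insert by (intro V_sum) auto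
  then show ?case using insert by (simp add: opexp_add)
qed

lemma B_tendsto: "(\<And>n. X n \<in> V) \<Longrightarrow> X \<longlonglongrightarrow> l \<Longrightarrow> l \<in> V \<Longrightarrow> (\<lambda>n. B (X n)) \<longlonglongrightarrow> B l"
proof -
  assume XV: "\<And>n. X n \<in> V" and lim: "X \<longlonglongrightarrow> l" and l: "l \<in> V"
  have "(\<lambda>n. K * norm (X n - l)) \<longlonglongrightarrow> K * 0"
    using lim by (intro tendsto_mult tendsto_const) (simp add: LIM_zero_iff tendsto_norm_zero)
  then have lim0: "(\<lambda>n. K * norm (X n - l)) \<longlonglongrightarrow> 0" by simp
  have "(\<lambda>n. B (X n) - B l) \<longlonglongrightarrow> 0"
  proof (rule Lim_null_comparison[OF _ lim0])
    show "\<forall>\<^sub>F n in sequentially. norm (B (X n) - B l) \<le> K * norm (X n - l)"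
    proof (rule always_eventually, rule allI)
      fix n
      have "B (X n) - B l = B (X n - l)" using XV l B_diff by simp
      then show "norm (B (X n) - B l) \<le> K * norm (X n - l)" using norm_B_le V_diff XV l by simp
    qed
  qed
  then show ?thesis by (simp add: LIM_zero_iff)
qed

lemma B_opexp_commute: "x \<in> V \<Longrightarrow> B (opexp B t x) = opexp B t (B x)"
proof -
  assume x: "x \<in> V"
  let ?f = "\<lambda>n. (t ^ n / fact n) *\<^sub>R (B ^^ n) x"
  have "(\<lambda>N. \<Sum>n<N. ?f n) \<longlonglongrightarrow> opexp B t x"
    unfolding opexp_def by (rule summable_LIMSEQ[OF summable_opexp_series[OF x]])
  then have "(\<lambda>N. B (\<Sum>n<N. ?f n)) \<longlonglongrightarrow> B (opexp B t x)"
    by (rule B_tendsto[rotated]) (auto intro!: V_sum V_scaleR B_pow_in opexp_in x)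
  moreover have "B (\<Sum>n<N. ?f n) = (\<Sum>n<N. (t ^ n / fact n) *\<^sub>R (B ^^ n) (B x))" for N
  proof (induction N)
    case 0 then show ?case by (simp add: B_zero)
  next
    case (Suc N)
    have "B (\<Sum>n<Suc N. ?f n) = B (\<Sum>n<N. ?f n) + B (?f N)"
      by (simp del: funpow.simps) (rule B_add; auto intro!: V_sum V_scaleR B_pow_in x)
    also have "B (?f N) = (t ^ N / fact N) *\<^sub>R (B ^^ N) (B x)"
      by (simp add: B_scaleR B_pow_in x funpow_Suc_right[symmetric] del: funpow.simps)
        (simp add: funpow_swap1)
    finally show ?case using Suc by simp
  qed
  moreover have "(\<lambda>N. \<Sum>n<N. (t ^ n / fact n) *\<^sub>R (B ^^ n) (B x)) \<longlonglongrightarrow> opexp B t (B x)"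
    unfolding opexp_def by (rule summable_LIMSEQ[OF summable_opexp_series[OF B_in[OF x]]])
  ultimately show ?thesis using LIMSEQ_unique by auto
qed

lemma opexp_has_vector_derivative: "x \<in> V \<Longrightarrow> ((\<lambda>t. opexp B t x) has_vector_derivative opexp B t (B x)) (at t)"
proof -
  assume x: "x \<in> V"
  have "((\<lambda>t. \<Sum>n. (t ^ n / fact n) *\<^sub>R (B ^^ n) x) has_vector_derivative
           (\<Sum>n. (t ^ n / fact n) *\<^sub>R (B ^^ Suc n) x)) (at t)"
    by (rule exp_series_has_vector_derivative[OF norm_B_pow_le'[OF x] K_nonneg])
  moreover have "(B ^^ Suc n) x = (B ^^ n) (B x)" for n by (simp add: funpow_swap1)
  ultimately show ?thesis unfolding opexp_def by simp
qed

lemma isCont_opexp: "x \<in> V \<Longrightarrow> isCont (\<lambda>t. opexp B t x) t"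
  using opexp_has_vector_derivative has_vector_derivative_continuous by blast

lemma opexp_increment_has_vector_derivative:
  assumes U: "(U has_vector_derivative U') (at \<tau> within S)"
    and UV: "\<And>y. y \<in> S \<Longrightarrow> U y \<in> V" and \<tau>: "\<tau> \<in> S" and U'V: "U' \<in> V"
    and \<sigma>: "(\<sigma> \<longlongrightarrow> \<sigma> \<tau>) (at \<tau> within S)"
  shows "((\<lambda>y. opexp B (\<sigma> y) (U y - U \<tau>)) has_vector_derivative opexp B (\<sigma> \<tau>) U') (at \<tau> within S)"
proof -
  define D where "D = opexp B (\<sigma> \<tau>) U'"
  define q where "q y = (1 / norm (y - \<tau>)) *\<^sub>R (U y - (U \<tau> + (y - \<tau>) *\<^sub>R U'))" for y
  define w where "w y = opexp B (\<sigma> y) U' - D" for y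
  have in_S: "\<forall>\<^sub>F y in at \<tau> within S. y \<in> S" by (simp add: eventually_at_filter)
  have qV: "q y \<in> V" if "y \<in> S" for y
    unfolding q_def using that by (intro V_scaleR V_diff V_add UV \<tau> U'V)
  have "(q \<longlongrightarrow> 0) (at \<tau> within S)"
    using U unfolding q_def[abs_def] has_vector_derivative_def has_derivative_within by blast
  then have "((\<lambda>y. exp (\<bar>\<sigma> y\<bar> * K) * norm (q y)) \<longlongrightarrow> exp (\<bar>\<sigma> \<tau>\<bar> * K) * 0) (at \<tau> within S)"
    using \<sigma> by (intro tendsto_mult tendsto_norm_zero tendsto_exp tendsto_rabs tendsto_const)
  then have "((\<lambda>y. exp (\<bar>\<sigma> y\<bar> * K) * norm (q y)) \<longlongrightarrow> 0) (at \<tau> within S)" by simp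
  moreover have "\<forall>\<^sub>F y in at \<tau> within S. norm (opexp B (\<sigma> y) (q y)) \<le> exp (\<bar>\<sigma> y\<bar> * K) * norm (q y)"
    using in_S by eventually_elim (rule norm_opexp_le[OF qV])
  ultimately have lim1: "((\<lambda>y. opexp B (\<sigma> y) (q y)) \<longlongrightarrow> 0) (at \<tau> within S)"
    by (rule Lim_null_comparison[rotated])
  have w0: "(w \<longlongrightarrow> 0) (at \<tau> within S)"
    unfolding w_def D_def using isCont_tendsto_compose[OF isCont_opexp[OF U'V] \<sigma>]
    by (simp add: LIM_zero_iff)
  have w_bound: "norm (((y - \<tau>) / norm (y - \<tau>)) *\<^sub>R w y) \<le> norm (w y)" for y
    by (cases "y = \<tau>") simp_all
  have lim2: "((\<lambda>y. ((y - \<tau>) / norm (y - \<tau>)) *\<^sub>R w y) \<longlongrightarrow> 0) (at \<tau> within S)"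
    by (rule Lim_null_comparison[OF always_eventually[OF allI[OF w_bound]] tendsto_norm_zero[OF w0]])
  have quotient_eq: "opexp B (\<sigma> y) (q y) + ((y - \<tau>) / norm (y - \<tau>)) *\<^sub>R w y
      = (1 / norm (y - \<tau>)) *\<^sub>R (opexp B (\<sigma> y) (U y - U \<tau>)
          - (opexp B (\<sigma> \<tau>) (U \<tau> - U \<tau>) + (y - \<tau>) *\<^sub>R D))" if "y \<in> S" for y
  proof -
    define W where "W = U y - (U \<tau> + (y - \<tau>) *\<^sub>R U')"
    have WV: "W \<in> V" unfolding W_def using that by (intro V_diff V_add V_scaleR UV \<tau> U'V)
    have "opexp B (\<sigma> y) (U y - U \<tau>) = opexp B (\<sigma> y) (W + (y - \<tau>) *\<^sub>R U')"
      by (simp add: W_def)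
    also have "\<dots> = opexp B (\<sigma> y) W + (y - \<tau>) *\<^sub>R opexp B (\<sigma> y) U'"
      using WV U'V by (simp add: opexp_add opexp_scaleR V_scaleR)
    finally have "opexp B (\<sigma> y) (U y - U \<tau>) = opexp B (\<sigma> y) W + (y - \<tau>) *\<^sub>R opexp B (\<sigma> y) U'" .
    moreover have "opexp B (\<sigma> y) (q y) = (1 / norm (y - \<tau>)) *\<^sub>R opexp B (\<sigma> y) W"
      unfolding q_def W_def[symmetric] using WV by (rule opexp_scaleR)
    ultimately show ?thesis
      by (simp add: w_def opexp_zero scaleR_diff_right scaleR_add_right divide_inverse mult.commute)
  qed
  have "\<forall>\<^sub>F y in at \<tau> within S. opexp B (\<sigma> y) (q y) + ((y - \<tau>) / norm (y - \<tau>)) *\<^sub>R w y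
      = (1 / norm (y - \<tau>)) *\<^sub>R (opexp B (\<sigma> y) (U y - U \<tau>)
          - (opexp B (\<sigma> \<tau>) (U \<tau> - U \<tau>) + (y - \<tau>) *\<^sub>R D))"
    using in_S by eventually_elim (rule quotient_eq)
  from Lim_transform_eventually[OF tendsto_add_zero[OF lim1 lim2] this]
  show ?thesis unfolding has_vector_derivative_def has_derivative_within D_def
    by (simp add: bounded_linear_scaleR_left)
qed

text \<open>The operator is applied separately to the fixed vector \<open>U \<tau>\<close> (chain rule in the time
  variable) and to the increment \<open>U y - U \<tau>\<close>, whose difference quotient tends to \<open>U'\<close>.\<close>
lemma opexp_compose_has_vector_derivative:
  assumes U: "(U has_vector_derivative U') (at \<tau> within S)"
    and UV: "\<And>y. y \<in> S \<Longrightarrow> U y \<in> V" and \<tau>: "\<tau> \<in> S" and U'V: "U' \<in> V"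
    and \<sigma>: "(\<sigma> has_real_derivative \<sigma>') (at \<tau> within S)"
  shows "((\<lambda>y. opexp B (\<sigma> y) (U y)) has_vector_derivative
            (opexp B (\<sigma> \<tau>) U' + \<sigma>' *\<^sub>R opexp B (\<sigma> \<tau>) (B (U \<tau>)))) (at \<tau> within S)"
proof -
  have Ut: "U \<tau> \<in> V" using UV \<tau> .
  have "(\<sigma> \<longlongrightarrow> \<sigma> \<tau>) (at \<tau> within S)"
    using has_derivative_continuous[OF \<sigma>[unfolded has_field_derivative_def]] continuous_within by blast
  note increment = opexp_increment_has_vector_derivative[OF U UV \<tau> U'V this]
  have "(\<sigma> has_vector_derivative \<sigma>') (at \<tau> within S)"
    using \<sigma> has_real_derivative_iff_has_vector_derivative by blast
  from vector_diff_chain_within[OF this has_vector_derivative_at_within[OF opexp_has_vector_derivative[OF Ut]]]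
  have "((\<lambda>y. opexp B (\<sigma> y) (U \<tau>)) has_vector_derivative \<sigma>' *\<^sub>R opexp B (\<sigma> \<tau>) (B (U \<tau>))) (at \<tau> within S)"
    by (simp add: o_def)
  from has_vector_derivative_add[OF this increment]
  have "((\<lambda>y. opexp B (\<sigma> y) (U y)) has_vector_derivative
      (\<sigma>' *\<^sub>R opexp B (\<sigma> \<tau>) (B (U \<tau>)) + opexp B (\<sigma> \<tau>) U')) (at \<tau> within S)"
  proof (rule has_vector_derivative_transform_within[OF _ zero_less_one \<tau>])
    fix y assume "y \<in> S"
    then show "opexp B (\<sigma> y) (U \<tau>) + opexp B (\<sigma> y) (U y - U \<tau>) = opexp B (\<sigma> y) (U y)"
      using UV Ut by (metis add.commute diff_add_cancel opexp_add V_diff)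
  qed
  then show ?thesis by (simp add: add.commute)
qed

lemma opexp_shift_has_vector_derivative: "x \<in> V \<Longrightarrow> ((\<lambda>s. opexp B (s + t) x) has_vector_derivative opexp B (s + t) (B x)) (at s within S)"
proof -
  assume x: "x \<in> V"
  have "((\<lambda>s. s + t) has_vector_derivative 1) (at s within S)"
    using has_real_derivative_iff_has_vector_derivative by (auto intro!: derivative_eq_intros)
  moreover have "((\<lambda>r. opexp B r x) has_vector_derivative opexp B (s + t) (B x)) (at (s + t) within (\<lambda>s. s + t) ` S)"
    by (rule has_vector_derivative_at_within[OF opexp_has_vector_derivative[OF x]])
  ultimately have "((\<lambda>r. opexp B r x) \<circ> (\<lambda>s. s + t) has_vector_derivative 1 *\<^sub>R opexp B (s + t) (B x)) (at s within S)"
    by (rule vector_diff_chain_within)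
  then show ?thesis by (simp add: o_def)
qed

lemma opexp_minus_opexp: assumes x: "x \<in> V" shows "opexp B (- s) (opexp B (s + t) x) = opexp B t x"
proof -
  define W where "W s = opexp B (- s) (opexp B (s + t) x)" for s
  have "((\<lambda>s. opexp B (- s) (opexp B (s + t) x)) has_vector_derivative
          (opexp B (- r) (opexp B (r + t) (B x)) + (-1) *\<^sub>R opexp B (- r) (B (opexp B (r + t) x)))) (at r within UNIV)"
    for r
    by (rule opexp_compose_has_vector_derivative[OF opexp_shift_has_vector_derivative[OF x]]) (auto intro!: derivative_eq_intros opexp_in x B_in)
  then have "(W has_derivative (\<lambda>h. 0)) (at r within UNIV)" for r
    unfolding W_def has_vector_derivative_def using B_opexp_commute[OF x] by simp
  then obtain c where "\<forall>s\<in>UNIV. W s = c" using has_derivative_zero_constant[of UNIV W] by auto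
  then have "W s = W 0" by simp
  then show ?thesis unfolding W_def by (simp add: opexp_at_0)
qed

lemma opexp_opexp: assumes x: "x \<in> V" shows "opexp B s (opexp B t x) = opexp B (s + t) x"
proof -
  define y where "y = opexp B s (opexp B t x) - opexp B (s + t) x"
  have yV: "y \<in> V" unfolding y_def by (intro V_diff opexp_in x)
  have "opexp B (- s) y = opexp B (- s) (opexp B (s + 0) (opexp B t x)) - opexp B (- s) (opexp B (s + t) x)"
    unfolding y_def by (simp add: opexp_diff opexp_in x)
  also have "\<dots> = 0" using opexp_minus_opexp[OF opexp_in[OF x], of s 0] opexp_minus_opexp[OF x, of s t] by (simp add: opexp_at_0)
  finally have "opexp B (- s) y = 0" .
  moreover have "opexp B (- (- s)) (opexp B (- s + 0) y) = opexp B 0 y" by (rule opexp_minus_opexp[OF yV])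
  ultimately have "y = 0" by (simp add: opexp_at_0 opexp_zero)
  then show ?thesis unfolding y_def by simp
qed

lemma variation_of_constants:
  assumes ab: "a \<le> b" and UV: "\<And>\<tau>. \<tau> \<in> {a..b} \<Longrightarrow> U \<tau> \<in> V"
    and gV: "\<And>\<tau>. \<tau> \<in> {a..b} \<Longrightarrow> g \<tau> \<in> V"
    and Ud: "\<And>\<tau>. \<tau> \<in> {a..b} \<Longrightarrow> (U has_vector_derivative (B (U \<tau>) + g \<tau>)) (at \<tau> within {a..b})"
  shows "((\<lambda>\<tau>. opexp B (b - \<tau>) (g \<tau>)) has_integral (U b - opexp B (b - a) (U a))) {a..b}"
proof -
  have "((\<lambda>\<tau>. opexp B (b - \<tau>) (U \<tau>)) has_vector_derivative opexp B (b - \<tau>) (g \<tau>)) (at \<tau> within {a..b})"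
    if t: "\<tau> \<in> {a..b}" for \<tau>
  proof -
    have "((\<lambda>\<tau>. opexp B (b - \<tau>) (U \<tau>)) has_vector_derivative
        (opexp B (b - \<tau>) (B (U \<tau>) + g \<tau>) + (-1) *\<^sub>R opexp B (b - \<tau>) (B (U \<tau>)))) (at \<tau> within {a..b})"
      by (rule opexp_compose_has_vector_derivative[OF Ud[OF t] UV t]) (auto intro!: derivative_eq_intros V_add B_in UV gV t)
    moreover have "opexp B (b - \<tau>) (B (U \<tau>) + g \<tau>) = opexp B (b - \<tau>) (B (U \<tau>)) + opexp B (b - \<tau>) (g \<tau>)"
      by (intro opexp_add B_in UV gV t)
    ultimately show ?thesis by simp
  qed
  from fundamental_theorem_of_calculus[OF ab this]
  show ?thesis by (simp add: opexp_at_0)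
qed

end

section \<open>Lagrange interpolation and Taylor remainders\<close>

lemma degree_lagrange_basis_le:
  assumes "i \<in> {1..s}"
  shows "degree (lagrange_basis c s i) \<le> s - 1"
proof -
  have "degree (lagrange_basis c s i) \<le> degree (\<Prod>m\<in>{1..s} - {i}. [:- c m, 1:])"
    unfolding lagrange_basis_def by (rule degree_smult_le)
  also have "\<dots> \<le> sum (degree \<circ> (\<lambda>m. [:- c m, 1:])) ({1..s} - {i})"
    by (rule degree_prod_sum_le) simp
  also have "\<dots> = card ({1..s} - {i})" by simp
  also have "\<dots> = s - 1" using assms by simp
  finally show ?thesis .
qed

lemma poly_lagrange_basis_node:
  assumes inj: "inj_on c {1..s}" and i: "i \<in> {1..s}" and j: "j \<in> {1..s}"
  shows "poly (lagrange_basis c s i) (c j) = (if i = j then 1 else 0)"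
proof (cases "i = j")
  case True
  have "(\<Prod>m\<in>{1..s} - {i}. (c i - c m)) \<noteq> 0"
  proof -
    have "c i - c m \<noteq> 0" if "m \<in> {1..s} - {i}" for m
      using inj i that by (auto dest: inj_onD)
    then show ?thesis by (simp add: prod_zero_iff)
  qed
  then show ?thesis using True unfolding lagrange_basis_def by (simp add: poly_prod)
next
  case False
  have "(\<Prod>m\<in>{1..s} - {i}. (c j - c m)) = 0"
    using False j by (intro prod_zero) auto
  then show ?thesis using False unfolding lagrange_basis_def by (simp add: poly_prod)
qed

lemma lagrange_basis_interpolates_powers:
  assumes inj: "inj_on c {1..s}" and m: "m < s"
  shows "(\<Sum>i\<in>{1..s}. poly (lagrange_basis c s i) \<theta> * c i ^ m) = \<theta> ^ m"
proof -
  have "(\<Sum>i\<in>{1..s}. smult (c i ^ m) (lagrange_basis c s i)) = monom 1 m"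
  proof (rule poly_eqI_degree[of "c ` {1..s}"])
    fix x assume "x \<in> c ` {1..s}"
    then obtain j where j: "j \<in> {1..s}" "x = c j" by blast
    then show "poly (\<Sum>i\<in>{1..s}. smult (c i ^ m) (lagrange_basis c s i)) x = poly (monom 1 m) x"
      by (simp add: poly_sum poly_monom poly_lagrange_basis_node[OF inj] if_distrib sum.delta
          cong: if_cong)
  next
    have "degree (\<Sum>i\<in>{1..s}. smult (c i ^ m) (lagrange_basis c s i)) \<le> s - 1"
      by (intro degree_sum_le order.trans[OF degree_smult_le] degree_lagrange_basis_le) auto
    then show "degree (\<Sum>i\<in>{1..s}. smult (c i ^ m) (lagrange_basis c s i)) < card (c ` {1..s})"
      using inj m by (simp add: card_image)
    show "degree (monom (1::real) m) < card (c ` {1..s})"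
      using inj m by (simp add: card_image degree_monom_eq)
  qed
  then have "poly (\<Sum>i\<in>{1..s}. smult (c i ^ m) (lagrange_basis c s i)) \<theta> = \<theta> ^ m"
    by (simp add: poly_monom)
  then show ?thesis by (simp add: poly_sum mult_ac)
qed

lemma lagrange_basis_interpolates_polynomials:
  fixes a :: "nat \<Rightarrow> 'a::real_vector"
  assumes inj: "inj_on c {1..s}" and k: "k > 0"
  shows "(\<Sum>i\<in>{1..s}. poly (lagrange_basis c s i) (\<tau> / k) *\<^sub>R (\<Sum>m<s. ((c i * k) ^ m / fact m) *\<^sub>R a m))
       = (\<Sum>m<s. (\<tau> ^ m / fact m) *\<^sub>R a m)"
proof -
  define l where "l i = poly (lagrange_basis c s i) (\<tau> / k)" for i
  have "(\<Sum>i\<in>{1..s}. l i *\<^sub>R (\<Sum>m<s. ((c i * k) ^ m / fact m) *\<^sub>R a m))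
      = (\<Sum>m<s. (\<Sum>i\<in>{1..s}. l i * (c i * k) ^ m / fact m) *\<^sub>R a m)"
    by (simp only: scaleR_sum_right scaleR_sum_left scaleR_scaleR times_divide_eq_right) (rule sum.swap)
  also have "\<dots> = (\<Sum>m<s. (\<tau> ^ m / fact m) *\<^sub>R a m)"
  proof (rule sum.cong[OF refl])
    fix m assume "m \<in> {..<s}"
    have "(\<Sum>i\<in>{1..s}. l i * (c i * k) ^ m / fact m) = (\<Sum>i\<in>{1..s}. l i * c i ^ m) * k ^ m / fact m"
      by (simp add: sum_distrib_right sum_distrib_left sum_divide_distrib power_mult_distrib mult_ac)
    also have "(\<Sum>i\<in>{1..s}. l i * c i ^ m) = (\<tau> / k) ^ m"
      unfolding l_def using \<open>m \<in> {..<s}\<close> by (intro lagrange_basis_interpolates_powers[OF inj]) simp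
    also have "(\<tau> / k) ^ m * k ^ m / fact m = \<tau> ^ m / fact m" using k by (simp add: power_divide)
    finally show "(\<Sum>i\<in>{1..s}. l i * (c i * k) ^ m / fact m) *\<^sub>R a m = (\<tau> ^ m / fact m) *\<^sub>R a m"
      by simp
  qed
  finally show ?thesis unfolding l_def .
qed

lemma abs_poly_le_sum_abs_coeff:
  fixes p :: "real poly"
  assumes "\<theta> \<in> {0..1}"
  shows "\<bar>poly p \<theta>\<bar> \<le> (\<Sum>j\<le>degree p. \<bar>coeff p j\<bar>)"
proof -
  have "\<bar>poly p \<theta>\<bar> = \<bar>\<Sum>j\<le>degree p. coeff p j * \<theta> ^ j\<bar>" by (simp add: poly_altdef)
  also have "\<dots> \<le> (\<Sum>j\<le>degree p. \<bar>coeff p j * \<theta> ^ j\<bar>)" by (rule sum_abs)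
  also have "\<dots> \<le> (\<Sum>j\<le>degree p. \<bar>coeff p j\<bar>)"
  proof (rule sum_mono)
    fix j
    have "\<bar>\<theta> ^ j\<bar> \<le> 1" using assms by (simp add: power_le_one power_abs)
    then show "\<bar>coeff p j * \<theta> ^ j\<bar> \<le> \<bar>coeff p j\<bar>"
      by (simp add: abs_mult mult_left_le)
  qed
  finally show ?thesis .
qed

lemma poly_as_shifted_sum:
  fixes p :: "'a::comm_semiring_1 poly"
  assumes "degree p \<le> s - 1" "s \<ge> 1"
  shows "poly p x = (\<Sum>j\<in>{1..s}. coeff p (j - 1) * x ^ (j - 1))"
proof -
  have "poly p x = (\<Sum>j\<le>degree p. coeff p j * x ^ j)" by (rule poly_altdef)
  also have "\<dots> = (\<Sum>j<s. coeff p j * x ^ j)"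
    using assms by (intro sum.mono_neutral_left) (auto simp: coeff_eq_0)
  also have "\<dots> = (\<Sum>j\<in>Suc ` {..<s}. coeff p (j - 1) * x ^ (j - 1))"
    by (subst sum.reindex) auto
  finally show ?thesis by (simp only: image_Suc_lessThan)
qed

lemma taylor_remainder_bound:
  fixes F :: "nat \<Rightarrow> real \<Rightarrow> 'a::banach"
  assumes s: "s \<ge> 1"
    and D: "\<And>j t. j < s \<Longrightarrow> t \<in> {0..T} \<Longrightarrow> (F j has_vector_derivative F (Suc j) t) (at t within {0..T})"
    and MF: "\<And>t. t \<in> {0..T} \<Longrightarrow> norm (F s t) \<le> MF" and MF0: "MF \<ge> 0"
    and t: "t \<ge> 0" and tk: "t + k \<le> T" and \<sigma>: "\<sigma> \<in> {0..k}"
  shows "norm (F 0 (t + \<sigma>) - (\<Sum>m<s. (\<sigma> ^ m / fact m) *\<^sub>R F m t)) \<le> MF * k ^ s"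
proof -
  have sub: "{t..t + \<sigma>} \<subseteq> {0..T}" using t tk \<sigma> by auto
  have D': "(F m has_vector_derivative F (Suc m) x) (at x within {t..t + \<sigma>})"
    if "m < s" "t \<le> x" "x \<le> t + \<sigma>" for m x
  proof -
    have "x \<in> {0..T}" using sub that by auto
    then show ?thesis using has_vector_derivative_within_subset[OF D[OF that(1) \<open>x \<in> {0..T}\<close>] sub] by simp
  qed
  have ti: "((\<lambda>x. ((t + \<sigma> - x) ^ (s - 1) / fact (s - 1)) *\<^sub>R F s x) has_integral
      F 0 (t + \<sigma>) - (\<Sum>i<s. ((t + \<sigma> - t) ^ i / fact i) *\<^sub>R F i t)) {t..t + \<sigma>}"
    by (rule Taylor_has_integral[of s F "F 0" t "t + \<sigma>"]) (use s D' \<sigma> in auto)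
  have bnd: "norm (((t + \<sigma> - x) ^ (s - 1) / fact (s - 1)) *\<^sub>R F s x) \<le> \<sigma> ^ (s - 1) * MF"
    if "x \<in> cbox t (t + \<sigma>)" for x
  proof -
    have x: "t \<le> x" "x \<le> t + \<sigma>" using that by auto
    have "norm (((t + \<sigma> - x) ^ (s - 1) / fact (s - 1)) *\<^sub>R F s x)
        = ((t + \<sigma> - x) ^ (s - 1) / fact (s - 1)) * norm (F s x)" using x by simp
    also have "\<dots> \<le> \<sigma> ^ (s - 1) * MF"
    proof (rule mult_mono)
      have "(t + \<sigma> - x) ^ (s - 1) / fact (s - 1) \<le> (t + \<sigma> - x) ^ (s - 1)"
        using fact_ge_1[of "s - 1", where 'a=real] x by (simp add: divide_le_eq mult_le_cancel_left1)
      also have "\<dots> \<le> \<sigma> ^ (s - 1)" using x by (intro power_mono) auto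
      finally show "(t + \<sigma> - x) ^ (s - 1) / fact (s - 1) \<le> \<sigma> ^ (s - 1)" .
      show "norm (F s x) \<le> MF" using MF sub x by auto
    qed (use \<sigma> in auto)
    finally show ?thesis .
  qed
  have "norm (F 0 (t + \<sigma>) - (\<Sum>i<s. ((t + \<sigma> - t) ^ i / fact i) *\<^sub>R F i t))
      \<le> \<sigma> ^ (s - 1) * MF * Henstock_Kurzweil_Integration.content (cbox t (t + \<sigma>))"
    by (rule has_integral_bound[OF _ ti[unfolded box_real(2)[symmetric]] bnd]) (use \<sigma> MF0 in auto)
  also have "Henstock_Kurzweil_Integration.content (cbox t (t + \<sigma>)) = \<sigma>" using \<sigma> by simp
  also have "\<sigma> ^ (s - 1) * MF * \<sigma> = MF * \<sigma> ^ s" using s by (cases s) (auto simp: mult_ac)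
  also have "\<dots> \<le> MF * k ^ s" using \<sigma> MF0 by (intro mult_left_mono power_mono) auto
  finally show ?thesis by simp
qed

definition lagrange_const :: "(nat \<Rightarrow> real) \<Rightarrow> nat \<Rightarrow> real" where
  "lagrange_const c s = (\<Sum>i\<in>{1..s}. \<Sum>j\<le>degree (lagrange_basis c s i). \<bar>coeff (lagrange_basis c s i) j\<bar>)"

lemma lagrange_interpolation_error:
  fixes F :: "nat \<Rightarrow> real \<Rightarrow> 'a::banach"
  assumes s: "s \<ge> 1"
    and D: "\<And>j t. j < s \<Longrightarrow> t \<in> {0..T} \<Longrightarrow> (F j has_vector_derivative F (Suc j) t) (at t within {0..T})"
    and MF: "\<And>t. t \<in> {0..T} \<Longrightarrow> norm (F s t) \<le> MF" and MF0: "MF \<ge> 0"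
    and inj: "inj_on c {1..s}" and cr: "c ` {1..s} \<subseteq> {0..1}"
    and k: "k > 0" and t: "t \<ge> 0" and tk: "t + k \<le> T" and \<tau>: "\<tau> \<in> {0..k}"
  shows "norm (F 0 (t + \<tau>) - (\<Sum>i\<in>{1..s}. poly (lagrange_basis c s i) (\<tau> / k) *\<^sub>R F 0 (t + c i * k)))
          \<le> MF * (1 + lagrange_const c s) * k ^ s"
proof -
  define l where "l i = poly (lagrange_basis c s i) (\<tau> / k)" for i
  define P where "P \<sigma> = (\<Sum>m<s. (\<sigma> ^ m / fact m) *\<^sub>R F m t)" for \<sigma>
  define R where "R \<sigma> = F 0 (t + \<sigma>) - P \<sigma>" for \<sigma>
  have Rb: "norm (R \<sigma>) \<le> MF * k ^ s" if "\<sigma> \<in> {0..k}" for \<sigma>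
    unfolding R_def P_def by (rule taylor_remainder_bound[OF s D MF MF0 t tk that])
  have ck: "c i * k \<in> {0..k}" if "i \<in> {1..s}" for i
  proof -
    have "c i \<in> c ` {1..s}" using that by (rule imageI)
    then have "c i \<in> {0..1}" using cr by blast
    then show ?thesis using k by (auto simp: mult_le_cancel_right1)
  qed
  have repr: "(\<Sum>i\<in>{1..s}. l i *\<^sub>R P (c i * k)) = P \<tau>"
    unfolding l_def P_def by (rule lagrange_basis_interpolates_polynomials[OF inj k])
  have "F 0 (t + \<tau>) - (\<Sum>i\<in>{1..s}. l i *\<^sub>R F 0 (t + c i * k))
      = R \<tau> - (\<Sum>i\<in>{1..s}. l i *\<^sub>R R (c i * k))"
    unfolding R_def using repr by (simp add: scaleR_diff_right sum_subtractf)
  also have "norm \<dots> \<le> norm (R \<tau>) + norm (\<Sum>i\<in>{1..s}. l i *\<^sub>R R (c i * k))" by (rule norm_triangle_ineq4)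
  also have "norm (\<Sum>i\<in>{1..s}. l i *\<^sub>R R (c i * k)) \<le> (\<Sum>i\<in>{1..s}. \<bar>l i\<bar> * (MF * k ^ s))"
  proof -
    have "norm (\<Sum>i\<in>{1..s}. l i *\<^sub>R R (c i * k)) \<le> (\<Sum>i\<in>{1..s}. norm (l i *\<^sub>R R (c i * k)))"
      by (rule norm_sum)
    also have "\<dots> \<le> (\<Sum>i\<in>{1..s}. \<bar>l i\<bar> * (MF * k ^ s))"
      by (rule sum_mono) (use Rb ck in \<open>auto intro: mult_left_mono\<close>)
    finally show ?thesis .
  qed
  also have "(\<Sum>i\<in>{1..s}. \<bar>l i\<bar> * (MF * k ^ s)) \<le> lagrange_const c s * (MF * k ^ s)"
  proof -
    have "(\<Sum>i\<in>{1..s}. \<bar>l i\<bar>) \<le> lagrange_const c s"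
      unfolding lagrange_const_def l_def
      by (rule sum_mono, rule abs_poly_le_sum_abs_coeff) (use \<tau> k in \<open>auto simp: divide_le_eq_1\<close>)
    then show ?thesis using MF0 k by (simp add: sum_distrib_right[symmetric] mult_right_mono)
  qed
  finally have "norm (F 0 (t + \<tau>) - (\<Sum>i\<in>{1..s}. l i *\<^sub>R F 0 (t + c i * k)))
      \<le> MF * k ^ s + lagrange_const c s * (MF * k ^ s)" using Rb[OF \<tau>] by linarith
  then show ?thesis unfolding l_def by (simp add: algebra_simps)
qed

section \<open>Integrals with values in a closed subspace\<close>

lemma has_integral_riemann_sum_approx:
  fixes g :: "real \<Rightarrow> 'a::real_normed_vector"
  assumes "(g has_integral I) {a..b}" "e > 0"
  obtains p where "p tagged_division_of {a..b}"
    "norm ((\<Sum>(x, k)\<in>p. Henstock_Kurzweil_Integration.content k *\<^sub>R g x) - I) < e"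
proof -
  obtain \<gamma> where "gauge \<gamma>" and close: "\<And>\<D>. \<D> tagged_division_of {a..b} \<Longrightarrow> \<gamma> fine \<D> \<Longrightarrow>
      norm ((\<Sum>(x, k)\<in>\<D>. Henstock_Kurzweil_Integration.content k *\<^sub>R g x) - I) < e"
    using assms unfolding has_integral_real by meson
  then obtain p where "p tagged_division_of cbox a b" "\<gamma> fine p"
    using fine_division_exists by blast
  then show ?thesis using that close by simp
qed

lemma subadditive_sum_le:
  fixes N :: "'a::real_normed_vector \<Rightarrow> real"
  assumes W: "subspace W" and add: "\<And>x y. x \<in> W \<Longrightarrow> y \<in> W \<Longrightarrow> N (x + y) \<le> N x + N y"
    and N0: "N 0 = 0"
  shows "finite p \<Longrightarrow> (\<And>i. i \<in> p \<Longrightarrow> f i \<in> W) \<Longrightarrow> N (sum f p) \<le> (\<Sum>i\<in>p. N (f i))"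
proof (induction p rule: finite_induct)
  case (insert a p)
  have "sum f p \<in> W" using insert W subspace_sum by blast
  then show ?case using insert add[of "f a" "sum f p"] by simp
qed (simp add: N0)

lemma riemann_sum_in_subspace:
  assumes "subspace W" "p tagged_division_of {a..b}" "\<And>t. t \<in> {a..b} \<Longrightarrow> g t \<in> W"
  shows "(\<Sum>(x, k)\<in>p. Henstock_Kurzweil_Integration.content k *\<^sub>R g x) \<in> W"
proof (intro subspace_sum[OF assms(1)])
  fix xk assume "xk \<in> p"
  moreover obtain x k where "xk = (x, k)" by (cases xk)
  ultimately have "x \<in> {a..b}" using assms(2) tagged_division_ofD(2,3) by blast
  then show "(case xk of (x, k) \<Rightarrow> Henstock_Kurzweil_Integration.content k *\<^sub>R g x) \<in> W"
    using \<open>xk = (x, k)\<close> by (simp add: subspace_scale[OF assms(1)] assms(3))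
qed

lemma riemann_sum_subadditive_bound:
  fixes N :: "'a::real_normed_vector \<Rightarrow> real"
  assumes W: "subspace W" and add: "\<And>x y. x \<in> W \<Longrightarrow> y \<in> W \<Longrightarrow> N (x + y) \<le> N x + N y"
    and hom: "\<And>r x. x \<in> W \<Longrightarrow> N (r *\<^sub>R x) = \<bar>r\<bar> * N x"
    and p: "p tagged_division_of {a..b}" and gW: "\<And>t. t \<in> {a..b} \<Longrightarrow> g t \<in> W"
    and gM: "\<And>t. t \<in> {a..b} \<Longrightarrow> N (g t) \<le> M" and ab: "a \<le> b"
  shows "N (\<Sum>(x, k)\<in>p. Henstock_Kurzweil_Integration.content k *\<^sub>R g x) \<le> M * (b - a)"
proof -
  have N0: "N 0 = 0" using hom[of 0 0] W subspace_0 by fastforce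
  have tag: "x \<in> {a..b}" if "(x, k) \<in> p" for x k
    using p that tagged_division_ofD(2,3) by blast
  have "N (\<Sum>(x, k)\<in>p. Henstock_Kurzweil_Integration.content k *\<^sub>R g x)
      \<le> (\<Sum>(x, k)\<in>p. N (Henstock_Kurzweil_Integration.content k *\<^sub>R g x))"
    using subadditive_sum_le[OF W add N0, of p "\<lambda>(x, k). Henstock_Kurzweil_Integration.content k *\<^sub>R g x"]
      p tag gW subspace_scale[OF W] by (force simp: case_prod_unfold)
  also have "\<dots> \<le> (\<Sum>(x, k)\<in>p. Henstock_Kurzweil_Integration.content k * M)"
  proof (intro sum_mono, clarify)
    fix x k assume "(x, k) \<in> p"
    then have "x \<in> {a..b}" by (rule tag)
    then show "N (Henstock_Kurzweil_Integration.content k *\<^sub>R g x) \<le> Henstock_Kurzweil_Integration.content k * M"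
      using hom[OF gW] gM content_pos_le by (simp add: mult_left_mono)
  qed
  also have "\<dots> = Henstock_Kurzweil_Integration.content (cbox a b) * M"
    using additive_content_tagged_division[of p a b] p ab
    by (simp add: sum_distrib_right[symmetric] case_prod_unfold)
  finally show ?thesis using ab by (simp add: mult_ac)
qed

lemma has_integral_in_closed_subspace:
  fixes g :: "real \<Rightarrow> 'a::banach"
  assumes W: "subspace W" "closed W"
    and gi: "(g has_integral I) {a..b}" and gW: "\<And>t. t \<in> {a..b} \<Longrightarrow> g t \<in> W"
  shows "I \<in> W"
proof -
  have "I \<in> closure W"
    unfolding closure_approachable
  proof (intro allI impI)
    fix e :: real assume "e > 0"
    then obtain p where p: "p tagged_division_of {a..b}"
      and "norm ((\<Sum>(x, k)\<in>p. Henstock_Kurzweil_Integration.content k *\<^sub>R g x) - I) < e"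
      using has_integral_riemann_sum_approx[OF gi] by blast
    then show "\<exists>y\<in>W. dist y I < e"
      using riemann_sum_in_subspace[OF W(1) p gW] by (auto simp: dist_norm)
  qed
  then show ?thesis using W(2) by simp
qed

lemma subadditive_integral_bound:
  fixes N :: "'a::banach \<Rightarrow> real" and g :: "real \<Rightarrow> 'a"
  assumes W: "subspace W" "closed W"
    and add: "\<And>x y. x \<in> W \<Longrightarrow> y \<in> W \<Longrightarrow> N (x + y) \<le> N x + N y"
    and hom: "\<And>r x. x \<in> W \<Longrightarrow> N (r *\<^sub>R x) = \<bar>r\<bar> * N x"
    and cb: "\<And>x. x \<in> W \<Longrightarrow> N x \<le> c * norm x"
    and gi: "(g has_integral I) {a..b}" and gW: "\<And>t. t \<in> {a..b} \<Longrightarrow> g t \<in> W"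
    and gM: "\<And>t. t \<in> {a..b} \<Longrightarrow> N (g t) \<le> M" and ab: "a \<le> b"
  shows "N I \<le> M * (b - a)"
proof (rule field_le_epsilon)
  fix e :: real assume "e > 0"
  then obtain p where p: "p tagged_division_of {a..b}"
    and close: "norm ((\<Sum>(x, k)\<in>p. Henstock_Kurzweil_Integration.content k *\<^sub>R g x) - I) < e / (\<bar>c\<bar> + 1)"
    using has_integral_riemann_sum_approx[OF gi, of "e / (\<bar>c\<bar> + 1)"] by auto
  define S where "S = (\<Sum>(x, k)\<in>p. Henstock_Kurzweil_Integration.content k *\<^sub>R g x)"
  have SW: "S \<in> W" unfolding S_def by (rule riemann_sum_in_subspace[OF W(1) p gW])
  have IW: "I \<in> W" by (rule has_integral_in_closed_subspace[OF W gi gW])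
  have "N I \<le> N S + N (I - S)"
    using add[OF SW, of "I - S"] IW SW subspace_diff[OF W(1)] by simp
  also have "N S \<le> M * (b - a)"
    unfolding S_def by (rule riemann_sum_subadditive_bound[OF W(1) add hom p gW gM ab])
  also have "N (I - S) \<le> \<bar>c\<bar> * (e / (\<bar>c\<bar> + 1))"
  proof -
    have "N (I - S) \<le> c * norm (I - S)" using cb IW SW subspace_diff[OF W(1)] by blast
    also have "\<dots> \<le> \<bar>c\<bar> * (e / (\<bar>c\<bar> + 1))"
      using close by (intro order.trans[OF mult_right_mono[OF abs_ge_self] mult_left_mono])
        (auto simp: S_def norm_minus_commute)
    finally show ?thesis .
  qed
  also have "\<bar>c\<bar> * (e / (\<bar>c\<bar> + 1)) \<le> e" using \<open>e > 0\<close> by (simp add: field_simps)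
  finally show "N I \<le> M * (b - a) + e" by simp
qed

section \<open>The quadrature step as an integral\<close>

context bounded_invariant_op
begin

lemma continuous_on_opexp_reflected: "y \<in> V \<Longrightarrow> continuous_on S (\<lambda>\<tau>. opexp B (k - \<tau>) y)"
proof -
  assume y: "y \<in> V"
  have "isCont (\<lambda>\<tau>. opexp B (k - \<tau>) y) \<tau>" for \<tau>
    by (rule isCont_o2[where f="\<lambda>\<tau>. k - \<tau>"]) (auto intro: isCont_opexp y continuous_intros)
  then show ?thesis by (simp add: continuous_at_imp_continuous_on)
qed

lemma phi_term_has_integral:
  assumes k: "k > 0" and y: "y \<in> V" and j: "j \<ge> 1"
  shows "((\<lambda>\<tau>. (coeff p (j - 1) * (\<tau> / k) ^ (j - 1)) *\<^sub>R opexp B (k - \<tau>) y) has_integral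
          k *\<^sub>R ((fact (j - 1) * coeff p (j - 1)) *\<^sub>R phi j B k y)) {0..k}"
proof -
  define g where "g \<tau> = (\<tau> ^ (j - 1) / fact (j - 1)) *\<^sub>R opexp B (k - \<tau>) y" for \<tau>
  have "continuous_on {0..k} g" unfolding g_def
    by (intro continuous_intros continuous_on_opexp_reflected y) auto
  then have gi: "(g has_integral integral {0..k} g) {0..k}"
    using integrable_continuous_real integrable_integral by blast
  define r where "r = k * (fact (j - 1) * coeff p (j - 1)) * (1 / k ^ j)"
  have "((\<lambda>\<tau>. r *\<^sub>R g \<tau>) has_integral r *\<^sub>R integral {0..k} g) {0..k}"
    by (rule has_integral_cmul[OF gi])
  moreover have "r *\<^sub>R g \<tau> = (coeff p (j - 1) * (\<tau> / k) ^ (j - 1)) *\<^sub>R opexp B (k - \<tau>) y" for \<tau>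
  proof -
    obtain m where m: "j = Suc m" using j by (cases j) auto
    have "r * (\<tau> ^ (j - 1) / fact (j - 1)) = coeff p (j - 1) * (\<tau> / k) ^ (j - 1)"
      unfolding r_def m using k by (simp add: field_simps power_divide)
    then show ?thesis unfolding g_def by simp
  qed
  moreover have "r *\<^sub>R integral {0..k} g = k *\<^sub>R ((fact (j - 1) * coeff p (j - 1)) *\<^sub>R phi j B k y)"
    unfolding r_def phi_def g_def using j by simp
  ultimately show ?thesis by simp
qed

lemma eq_step_has_integral:
  assumes k: "k > 0" and x: "x \<in> V" and YV: "\<And>i. i \<in> {1..s} \<Longrightarrow> L (f (t + c i * k)) \<in> V"
  shows "((\<lambda>\<tau>. \<Sum>i\<in>{1..s}. poly (lagrange_basis c s i) (\<tau> / k) *\<^sub>R opexp B (k - \<tau>) (L (f (t + c i * k))))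
          has_integral (eq_step B L f c s k t x - opexp B k x)) {0..k}"
proof -
  let ?Y = "\<lambda>i. L (f (t + c i * k))"
  let ?l = "lagrange_basis c s"
  have "((\<lambda>\<tau>. \<Sum>i\<in>{1..s}. \<Sum>j\<in>{1..s}. (coeff (?l i) (j - 1) * (\<tau> / k) ^ (j - 1)) *\<^sub>R opexp B (k - \<tau>) (?Y i))
         has_integral (\<Sum>i\<in>{1..s}. \<Sum>j\<in>{1..s}. k *\<^sub>R ((fact (j - 1) * coeff (?l i) (j - 1)) *\<^sub>R phi j B k (?Y i)))) {0..k}"
    by (intro has_integral_sum finite_atLeastAtMost phi_term_has_integral k YV) auto
  moreover have inner: "(\<Sum>j\<in>{1..s}. (coeff (?l i) (j - 1) * (\<tau> / k) ^ (j - 1)) *\<^sub>R opexp B (k - \<tau>) (?Y i))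
      = poly (?l i) (\<tau> / k) *\<^sub>R opexp B (k - \<tau>) (?Y i)" if "i \<in> {1..s}" for i \<tau>
    using poly_as_shifted_sum[OF degree_lagrange_basis_le[OF that], where x="\<tau> / k"] that
    by (simp add: scaleR_sum_left[symmetric])
  moreover have "(\<Sum>i\<in>{1..s}. \<Sum>j\<in>{1..s}. k *\<^sub>R ((fact (j - 1) * coeff (?l i) (j - 1)) *\<^sub>R phi j B k (?Y i)))
      = eq_step B L f c s k t x - opexp B k x"
    unfolding eq_step_def quad_coeff_def by (simp add: scaleR_sum_right)
  moreover have "(\<lambda>\<tau>. \<Sum>i\<in>{1..s}. \<Sum>j\<in>{1..s}. (coeff (?l i) (j - 1) * (\<tau> / k) ^ (j - 1)) *\<^sub>R opexp B (k - \<tau>) (?Y i))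
     = (\<lambda>\<tau>. \<Sum>i\<in>{1..s}. poly (?l i) (\<tau> / k) *\<^sub>R opexp B (k - \<tau>) (?Y i))"
    by (rule ext, rule sum.cong[OF refl], rule inner)
  ultimately show ?thesis by simp
qed

end

section \<open>Error analysis on one discrete space\<close>

lemma has_vector_derivative_shift:
  assumes U: "\<And>t. t \<in> {0..T} \<Longrightarrow> (U has_vector_derivative U' t) (at t within {0..T})"
    and t: "t \<ge> 0" and tk: "t + k \<le> T" and \<sigma>: "\<sigma> \<in> {0..k}"
  shows "((\<lambda>\<sigma>. U (t + \<sigma>)) has_vector_derivative U' (t + \<sigma>)) (at \<sigma> within {0..k})"
proof -
  have img: "(\<lambda>\<sigma>. t + \<sigma>) ` {0..k} \<subseteq> {0..T}" using t tk by auto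
  have "((\<lambda>\<sigma>. t + \<sigma>) has_vector_derivative 1) (at \<sigma> within {0..k})"
    using has_real_derivative_iff_has_vector_derivative by (auto intro!: derivative_eq_intros)
  moreover have "t + \<sigma> \<in> {0..T}" using img \<sigma> by blast
  then have "(U has_vector_derivative U' (t + \<sigma>)) (at (t + \<sigma>) within (\<lambda>\<sigma>. t + \<sigma>) ` {0..k})"
    using has_vector_derivative_within_subset[OF U img] by blast
  ultimately have "(U \<circ> (\<lambda>\<sigma>. t + \<sigma>) has_vector_derivative 1 *\<^sub>R U' (t + \<sigma>)) (at \<sigma> within {0..k})"
    by (rule vector_diff_chain_within)
  then show ?thesis by (simp add: o_def)
qed

lemma lagrange_const_nonneg: "lagrange_const c s \<ge> 0"
  unfolding lagrange_const_def by (intro sum_nonneg) auto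

definition local_error_const :: "real \<Rightarrow> real \<Rightarrow> (nat \<Rightarrow> real) \<Rightarrow> nat \<Rightarrow> real" where
  "local_error_const C MF c s = C * C * MF * (1 + lagrange_const c s)"

text \<open>One space-discretised problem \<open>U' = B U + L f\<close> on the invariant subspace V (the paper's
  \<open>X\<^sub>h\<^sub>,\<^sub>0\<close> with \<open>B = A\<^sub>h\<^sub>,\<^sub>0\<close>), measured in the norm N of the ambient discrete space Xh,
  in which \<open>e\<^sup>t\<^sup>B\<close> and L are bounded by C; F is the chain of derivatives of f and MF bounds the top one.\<close>
locale exponential_quadrature = bounded_invariant_op V B K for V :: "'a::banach set" and B K +
  fixes Xh :: "'a set" and N :: "'a \<Rightarrow> real" and L :: "'a \<Rightarrow> 'a" and C :: real and c' :: real
    and U :: "real \<Rightarrow> 'a" and f :: "real \<Rightarrow> 'a" and T :: real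
    and s :: nat and c :: "nat \<Rightarrow> real" and F :: "nat \<Rightarrow> real \<Rightarrow> 'a" and MF :: real
  assumes Xh_subspace: "subspace Xh" and Xh_closed: "closed Xh" and V_subset_Xh: "V \<subseteq> Xh"
    and N_triangle: "\<And>x y. x \<in> Xh \<Longrightarrow> y \<in> Xh \<Longrightarrow> N (x + y) \<le> N x + N y"
    and N_scaleR: "\<And>r x. x \<in> Xh \<Longrightarrow> N (r *\<^sub>R x) = \<bar>r\<bar> * N x"
    and N_le_norm: "\<And>x. x \<in> Xh \<Longrightarrow> N x \<le> c' * norm x"
    and N_nonneg: "\<And>x. x \<in> Xh \<Longrightarrow> N x \<ge> 0"
    and L_bounded_linear: "bounded_linear L" and L_in: "\<And>x. L x \<in> V" and C_nonneg: "C \<ge> 0"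
    and N_opexp_le: "\<And>t x. t \<ge> 0 \<Longrightarrow> x \<in> V \<Longrightarrow> N (opexp B t x) \<le> C * N x"
    and N_L_le: "\<And>x. N (L x) \<le> C * norm x"
    and U_in: "\<And>t. t \<in> {0..T} \<Longrightarrow> U t \<in> V"
    and U_deriv: "\<And>t. t \<in> {0..T} \<Longrightarrow> (U has_vector_derivative (B (U t) + L (f t))) (at t within {0..T})"
    and s_pos: "s \<ge> 1"
    and F_deriv: "\<And>j t. j < s \<Longrightarrow> t \<in> {0..T} \<Longrightarrow>
      (F j has_vector_derivative F (Suc j) t) (at t within {0..T})"
    and F_0: "\<And>t. t \<in> {0..T} \<Longrightarrow> F 0 t = f t"
    and norm_F_le: "\<And>t. t \<in> {0..T} \<Longrightarrow> norm (F s t) \<le> MF" and MF_nonneg: "MF \<ge> 0"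
    and c_inj: "inj_on c {1..s}" and c_range: "c ` {1..s} \<subseteq> {0..1}"
begin

lemma N_zero: "N 0 = 0"
  using N_scaleR[of 0 0] Xh_subspace subspace_0 by fastforce

lemma L_linear: "linear L"
  using L_bounded_linear bounded_linear.linear by blast

lemma node_in_step:
  assumes "i \<in> {1..s}" "k > 0" "t \<ge> 0" "t + k \<le> T"
  shows "t + c i * k \<in> {0..T}" "c i * k \<in> {0..k}"
proof -
  have "c i \<in> {0..1}" using c_range assms(1) by blast
  then have "c i * k \<le> k" "0 \<le> c i * k" using assms(2) by (auto simp: mult_le_cancel_right1)
  then show "t + c i * k \<in> {0..T}" "c i * k \<in> {0..k}" using assms(3,4) by auto
qed

lemma local_error_const_nonneg: "local_error_const C MF c s \<ge> 0"
  unfolding local_error_const_def using C_nonneg MF_nonneg lagrange_const_nonneg by simp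

text \<open>Variation of constants for the exact step, minus the quadrature step, leaves the integral of
  \<open>e^{(k-\<sigma>)B}\<close> applied to L of the interpolation error of f.\<close>
lemma local_error_has_integral:
  assumes k: "k > 0" and t: "t \<ge> 0" and tk: "t + k \<le> T"
  shows "((\<lambda>\<sigma>. opexp B (k - \<sigma>) (L (f (t + \<sigma>)
            - (\<Sum>i\<in>{1..s}. poly (lagrange_basis c s i) (\<sigma> / k) *\<^sub>R f (t + c i * k)))))
          has_integral (U (t + k) - eq_step B L f c s k t (U t))) {0..k}"
proof -
  let ?l = "lagrange_basis c s"
  have Ut: "U t \<in> V" using U_in t tk k by auto
  have "((\<lambda>\<sigma>. opexp B (k - \<sigma>) (L (f (t + \<sigma>)))) has_integral (U (t + k) - opexp B (k - 0) (U (t + 0)))) {0..k}"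
    using t tk k
    by (intro variation_of_constants has_vector_derivative_shift[OF U_deriv] U_in L_in) auto
  from has_integral_diff[OF this eq_step_has_integral[where L=L and f=f and t=t and c=c and s=s, OF k Ut L_in]]
  have "((\<lambda>\<sigma>. opexp B (k - \<sigma>) (L (f (t + \<sigma>)))
      - (\<Sum>i\<in>{1..s}. poly (?l i) (\<sigma> / k) *\<^sub>R opexp B (k - \<sigma>) (L (f (t + c i * k)))))
      has_integral (U (t + k) - eq_step B L f c s k t (U t))) {0..k}"
    by (simp add: opexp_at_0)
  moreover have "opexp B (k - \<sigma>) (L (f (t + \<sigma>))) - (\<Sum>i\<in>{1..s}. poly (?l i) (\<sigma> / k) *\<^sub>R opexp B (k - \<sigma>) (L (f (t + c i * k))))
      = opexp B (k - \<sigma>) (L (f (t + \<sigma>) - (\<Sum>i\<in>{1..s}. poly (?l i) (\<sigma> / k) *\<^sub>R f (t + c i * k))))" for \<sigma>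
    by (simp add: linear_diff[OF L_linear] linear_sum[OF L_linear] linear_scale[OF L_linear]
        opexp_diff opexp_sum opexp_scaleR V_sum V_scaleR L_in)
  ultimately show ?thesis by simp
qed

lemma local_error_bound:
  assumes k: "k > 0" and t: "t \<ge> 0" and tk: "t + k \<le> T"
  shows "N (U (t + k) - eq_step B L f c s k t (U t)) \<le> local_error_const C MF c s * k ^ (s + 1)"
proof -
  define w where "w \<sigma> = f (t + \<sigma>) - (\<Sum>i\<in>{1..s}. poly (lagrange_basis c s i) (\<sigma> / k) *\<^sub>R f (t + c i * k))"
    for \<sigma>
  have "N (opexp B (k - \<sigma>) (L (w \<sigma>))) \<le> local_error_const C MF c s * k ^ s" if "\<sigma> \<in> {0..k}" for \<sigma>
  proof -
    have "w \<sigma> = F 0 (t + \<sigma>) - (\<Sum>i\<in>{1..s}. poly (lagrange_basis c s i) (\<sigma> / k) *\<^sub>R F 0 (t + c i * k))"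
      unfolding w_def using that t tk k node_in_step by (simp add: F_0)
    then have "norm (w \<sigma>) \<le> MF * (1 + lagrange_const c s) * k ^ s"
      using lagrange_interpolation_error[OF s_pos F_deriv norm_F_le MF_nonneg c_inj c_range k t tk that]
      by simp
    have "N (opexp B (k - \<sigma>) (L (w \<sigma>))) \<le> C * N (L (w \<sigma>))"
      using that L_in by (intro N_opexp_le) auto
    also have "\<dots> \<le> C * (C * norm (w \<sigma>))" using N_L_le C_nonneg by (intro mult_left_mono)
    also have "\<dots> \<le> C * (C * (MF * (1 + lagrange_const c s) * k ^ s))"
      using \<open>norm (w \<sigma>) \<le> _\<close> C_nonneg by (intro mult_left_mono) auto
    finally show ?thesis unfolding local_error_const_def by (simp add: mult_ac)
  qed
  then have "N (U (t + k) - eq_step B L f c s k t (U t)) \<le> local_error_const C MF c s * k ^ s * (k - 0)"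
    using k local_error_has_integral[OF k t tk] V_subset_Xh
    by (intro subadditive_integral_bound[OF Xh_subspace Xh_closed N_triangle N_scaleR N_le_norm])
      (auto simp: w_def intro!: opexp_in L_in)
  then show ?thesis by (simp add: mult_ac)
qed

lemma eq_step_in:
  assumes k: "k > 0" and x: "x \<in> V"
  shows "eq_step B L f c s k t x \<in> V"
proof -
  have "eq_step B L f c s k t x - opexp B k x \<in> V"
    by (rule has_integral_in_closed_subspace[OF V_subspace V_closed
          eq_step_has_integral[where L=L and f=f and t=t and c=c and s=s, OF k x L_in]])
      (intro V_sum V_scaleR opexp_in L_in finite_atLeastAtMost)
  then have "(eq_step B L f c s k t x - opexp B k x) + opexp B k x \<in> V" by (intro V_add opexp_in x)
  then show ?thesis by simp
qed

lemma eq_iter_in: "k > 0 \<Longrightarrow> x \<in> V \<Longrightarrow> eq_iter B L f c s k x n \<in> V"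
  by (induction n) (auto intro: eq_step_in)

lemma global_error_step:
  assumes k: "k > 0" and x: "x \<in> V" and n: "real (Suc n) * k \<le> T"
  shows "U (real (Suc n) * k) - eq_step B L f c s k (real n * k) x
       = (U (real n * k + k) - eq_step B L f c s k (real n * k) (U (real n * k)))
         + opexp B k (U (real n * k) - x)"
proof -
  have "U (real n * k) \<in> V" using U_in k n by (simp add: algebra_simps)
  then show ?thesis using x by (simp add: eq_step_def opexp_diff algebra_simps)
qed

text \<open>The bound is proved for every \<open>e^{jB}\<close>-image of the global error, so that the induction
  step can absorb the propagation \<open>e^{kB}\<close> of the earlier local errors.\<close>
lemma global_error_propagation:
  assumes k: "k > 0"
  shows "real n * k \<le> T \<Longrightarrow> \<forall>j\<ge>0. N (opexp B j (U (real n * k) - eq_iter B L f c s k (U 0) n))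
           \<le> real n * (C * local_error_const C MF c s * k ^ (s + 1))"
proof (induction n)
  case 0
  then show ?case by (simp add: opexp_zero N_zero)
next
  case (Suc n)
  let ?e = "U (real n * k) - eq_iter B L f c s k (U 0) n"
  define \<rho> where "\<rho> = U (real n * k + k) - eq_step B L f c s k (real n * k) (U (real n * k))"
  have nT: "real n * k \<le> T" and nk: "real n * k \<ge> 0" using Suc.prems k by (auto simp: algebra_simps)
  have itV: "eq_iter B L f c s k (U 0) n \<in> V" using U_in nk nT by (intro eq_iter_in k) auto
  have eV: "?e \<in> V" using U_in nk nT itV by (intro V_diff) auto
  have \<rho>V: "\<rho> \<in> V" unfolding \<rho>_def
    using U_in Suc.prems nk nT k by (intro V_diff eq_step_in) (auto simp: algebra_simps)
  have \<rho>_le: "N \<rho> \<le> local_error_const C MF c s * k ^ (s + 1)"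
    unfolding \<rho>_def using k nk Suc.prems by (intro local_error_bound) (auto simp: algebra_simps)
  show ?case
  proof (intro allI impI)
    fix j :: real assume j: "j \<ge> 0"
    have "opexp B j (U (real (Suc n) * k) - eq_iter B L f c s k (U 0) (Suc n))
        = opexp B j \<rho> + opexp B (j + k) ?e"
      using global_error_step[OF k itV Suc.prems] \<rho>V eV
      by (simp add: \<rho>_def opexp_add opexp_in opexp_opexp)
    also have "N \<dots> \<le> N (opexp B j \<rho>) + N (opexp B (j + k) ?e)"
      using V_subset_Xh opexp_in \<rho>V eV by (intro N_triangle) auto
    also have "N (opexp B j \<rho>) \<le> C * local_error_const C MF c s * k ^ (s + 1)"
      using N_opexp_le[OF j \<rho>V] \<rho>_le C_nonneg by (simp add: mult.assoc) (meson mult_left_mono order_trans)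
    also have "N (opexp B (j + k) ?e) \<le> real n * (C * local_error_const C MF c s * k ^ (s + 1))"
      using Suc.IH[OF nT] j k by auto
    finally show "N (opexp B j (U (real (Suc n) * k) - eq_iter B L f c s k (U 0) (Suc n)))
        \<le> real (Suc n) * (C * local_error_const C MF c s * k ^ (s + 1))"
      by (simp add: algebra_simps)
  qed
qed

lemma global_error_bound:
  assumes k: "k > 0" and nT: "real n * k \<le> T"
  shows "N (U (real n * k) - eq_iter B L f c s k (U 0) n) \<le> (C * local_error_const C MF c s * T) * k ^ s"
proof -
  have "N (U (real n * k) - eq_iter B L f c s k (U 0) n) \<le> real n * (C * local_error_const C MF c s * k ^ (s + 1))"
    using global_error_propagation[OF k nT] by (auto simp: opexp_at_0 dest: spec[of _ 0])
  also have "\<dots> = (C * local_error_const C MF c s * k ^ s) * (real n * k)" by (simp add: mult_ac)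
  also have "\<dots> \<le> (C * local_error_const C MF c s * k ^ s) * T"
    using nT C_nonneg local_error_const_nonneg k by (intro mult_left_mono) auto
  finally show ?thesis by (simp add: mult_ac)
qed

lemma eq_iter_zero_forcing:
  assumes f0: "\<And>t. t \<in> {0..T} \<Longrightarrow> f t = 0" and k: "k > 0"
  shows "real n * k \<le> T \<Longrightarrow> eq_iter B L f c s k 0 n = 0"
proof (induction n)
  case (Suc n)
  have nT: "real n * k \<le> T" using Suc.prems k by (simp add: algebra_simps)
  have "f (real n * k + c i * k) = 0" if "i \<in> {1..s}" for i
    using node_in_step[OF that k, of "real n * k"] Suc.prems k by (intro f0) (auto simp: algebra_simps)
  moreover have "phi j B k 0 = 0" for j unfolding phi_def by (simp add: opexp_zero)
  ultimately show ?case
    using Suc.IH[OF nT] by (simp add: eq_step_def opexp_zero linear_0[OF L_linear])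
qed simp

text \<open>Because \<open>L A u = B R u\<close>, the error \<open>L u - U\<close> solves the semidiscrete equation with defect
  \<open>B (R u - L u)\<close>, the error of the elliptic projection.\<close>
lemma projection_error_has_derivative:
  fixes u :: "real \<Rightarrow> 'a" and A R :: "'a \<Rightarrow> 'a"
  assumes u_deriv: "(u has_vector_derivative (A (u \<tau>) + f \<tau>)) (at \<tau> within {0..T})"
    and LA: "L (A (u \<tau>)) = B (R (u \<tau>))" and RV: "R (u \<tau>) \<in> V" and \<tau>: "\<tau> \<in> {0..T}"
  shows "((\<lambda>\<tau>. L (u \<tau>) - U \<tau>) has_vector_derivative
           B (L (u \<tau>) - U \<tau>) + B (R (u \<tau>) - L (u \<tau>))) (at \<tau> within {0..T})"
proof -
  have "((\<lambda>\<tau>. L (u \<tau>)) has_vector_derivative L (A (u \<tau>) + f \<tau>)) (at \<tau> within {0..T})"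
    by (rule bounded_linear.has_vector_derivative[OF L_bounded_linear u_deriv])
  from has_vector_derivative_diff[OF this U_deriv[OF \<tau>]]
  have "((\<lambda>\<tau>. L (u \<tau>) - U \<tau>) has_vector_derivative L (A (u \<tau>) + f \<tau>) - (B (U \<tau>) + L (f \<tau>)))
      (at \<tau> within {0..T})" .
  moreover have "L (A (u \<tau>) + f \<tau>) - (B (U \<tau>) + L (f \<tau>)) = B (R (u \<tau>)) - B (U \<tau>)"
    using LA by (simp add: linear_add[OF L_linear])
  also have "\<dots> = B (L (u \<tau>) - U \<tau>) + B (R (u \<tau>) - L (u \<tau>))"
    using L_in RV U_in[OF \<tau>] by (simp add: B_diff)
  ultimately show ?thesis by simp
qed

lemma projection_error_bound:
  fixes u :: "real \<Rightarrow> 'a" and A R :: "'a \<Rightarrow> 'a" and \<delta> :: real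
  assumes u_deriv: "\<And>t. t \<in> {0..T} \<Longrightarrow> (u has_vector_derivative (A (u t) + f t)) (at t within {0..T})"
    and LA: "\<And>t. t \<in> {0..T} \<Longrightarrow> L (A (u t)) = B (R (u t))"
    and RV: "\<And>t. t \<in> {0..T} \<Longrightarrow> R (u t) \<in> V"
    and Rest: "\<And>t. t \<in> {0..T} \<Longrightarrow> N (B (R (u t) - L (u t))) \<le> \<delta>"
    and U0: "U 0 = L (u 0)"
    and t: "t \<in> {0..T}"
  shows "N (L (u t) - U t) \<le> C * \<delta> * T"
proof -
  have T0: "0 \<in> {0..T}" using t by auto
  have \<delta>_nonneg: "\<delta> \<ge> 0"
  proof -
    have "B (R (u 0) - L (u 0)) \<in> V" using RV[OF T0] L_in by (intro B_in V_diff)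
    then have "N (B (R (u 0) - L (u 0))) \<ge> 0" using N_nonneg V_subset_Xh by blast
    then show ?thesis using Rest[OF T0] by linarith
  qed
  define e where "e \<tau> = L (u \<tau>) - U \<tau>" for \<tau>
  define g where "g \<tau> = B (R (u \<tau>) - L (u \<tau>))" for \<tau>
  have sub: "{0..t} \<subseteq> {0..T}" using t by auto
  have eV: "e \<tau> \<in> V" if "\<tau> \<in> {0..T}" for \<tau> unfolding e_def using that L_in U_in by (intro V_diff)
  have gV: "g \<tau> \<in> V" if "\<tau> \<in> {0..T}" for \<tau> unfolding g_def using that L_in RV by (intro B_in V_diff)
  have ed: "(e has_vector_derivative (B (e \<tau>) + g \<tau>)) (at \<tau> within {0..T})" if "\<tau> \<in> {0..T}" for \<tau>
    unfolding e_def[abs_def] g_def using that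
    by (intro projection_error_has_derivative[where A=A] u_deriv LA RV)
  have vi: "((\<lambda>\<tau>. opexp B (t - \<tau>) (g \<tau>)) has_integral (e t - opexp B (t - 0) (e 0))) {0..t}"
  proof (rule variation_of_constants)
    show "0 \<le> t" using t by auto
    show "\<And>\<tau>. \<tau> \<in> {0..t} \<Longrightarrow> e \<tau> \<in> V" using eV sub by blast
    show "\<And>\<tau>. \<tau> \<in> {0..t} \<Longrightarrow> g \<tau> \<in> V" using gV sub by blast
    show "\<And>\<tau>. \<tau> \<in> {0..t} \<Longrightarrow> (e has_vector_derivative B (e \<tau>) + g \<tau>) (at \<tau> within {0..t})"
      using ed sub has_vector_derivative_within_subset by blast
  qed
  have e0: "e 0 = 0" unfolding e_def using U0 by simp
  have vi': "((\<lambda>\<tau>. opexp B (t - \<tau>) (g \<tau>)) has_integral e t) {0..t}"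
    using vi by (simp add: e0 opexp_zero)
  have "N (e t) \<le> (C * \<delta>) * (t - 0)"
  proof (rule subadditive_integral_bound[OF Xh_subspace Xh_closed N_triangle N_scaleR N_le_norm vi'])
    fix \<tau> assume tau: "\<tau> \<in> {0..t}"
    then have tT: "\<tau> \<in> {0..T}" using sub by blast
    show "opexp B (t - \<tau>) (g \<tau>) \<in> Xh" using opexp_in gV[OF tT] V_subset_Xh by blast
    have "N (opexp B (t - \<tau>) (g \<tau>)) \<le> C * N (g \<tau>)" using N_opexp_le tau gV[OF tT] by auto
    also have "\<dots> \<le> C * \<delta>" using C_nonneg Rest[OF tT] unfolding g_def by (intro mult_left_mono) auto
    finally show "N (opexp B (t - \<tau>) (g \<tau>)) \<le> C * \<delta>" .
  next
    show "0 \<le> t" using t by auto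
  qed
  also have "\<dots> \<le> C * \<delta> * T" using t C_nonneg \<delta>_nonneg by (intro mult_left_mono) auto
  finally show ?thesis unfolding e_def .
qed

lemma full_error_bound:
  fixes u :: "real \<Rightarrow> 'a" and A R :: "'a \<Rightarrow> 'a"
  assumes u_deriv: "\<And>t. t \<in> {0..T} \<Longrightarrow> (u has_vector_derivative (A (u t) + f t)) (at t within {0..T})"
    and LA: "\<And>t. t \<in> {0..T} \<Longrightarrow> L (A (u t)) = B (R (u t))"
    and RV: "\<And>t. t \<in> {0..T} \<Longrightarrow> R (u t) \<in> V"
    and R_err: "\<And>t. t \<in> {0..T} \<Longrightarrow> N (B (R (u t) - L (u t))) \<le> \<delta>"
    and U0: "U 0 = L (u 0)" and k: "k > 0" and nT: "real n * k \<le> T"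
  shows "N (L (u (real n * k)) - eq_iter B L f c s k (L (u 0)) n)
           \<le> C * \<delta> * T + (C * local_error_const C MF c s * T) * k ^ s"
proof -
  have t: "real n * k \<in> {0..T}" using k nT by simp
  have "U 0 \<in> V" "U (real n * k) \<in> V" using t U_in by auto
  then have "L (u (real n * k)) - U (real n * k) \<in> V" "U (real n * k) - eq_iter B L f c s k (U 0) n \<in> V"
    using L_in eq_iter_in[OF k] by (auto intro: V_diff)
  then have "L (u (real n * k)) - U (real n * k) \<in> Xh" "U (real n * k) - eq_iter B L f c s k (U 0) n \<in> Xh"
    using V_subset_Xh by auto
  then have "N (L (u (real n * k)) - eq_iter B L f c s k (U 0) n)
      \<le> N (L (u (real n * k)) - U (real n * k)) + N (U (real n * k) - eq_iter B L f c s k (U 0) n)"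
    using N_triangle by fastforce
  also have "\<dots> \<le> C * \<delta> * T + (C * local_error_const C MF c s * T) * k ^ s"
    using projection_error_bound[OF u_deriv LA RV R_err U0 t] global_error_bound[OF k nT]
    by (rule add_mono)
  finally show ?thesis by (simp add: U0)
qed


text \<open>The elliptic estimate \<open>N (B (R u - L u)) \<le> \<epsilon> \<parallel>u\<parallel>\<^sub>Z\<close> at a point where \<open>u \<noteq> 0\<close> forces \<open>\<epsilon> \<ge> 0\<close>.\<close>
lemma projected_error_bound:
  fixes u :: "real \<Rightarrow> 'a" and A R :: "'a \<Rightarrow> 'a" and nZ :: "'a \<Rightarrow> real"
  assumes u_deriv: "\<And>t. t \<in> {0..T} \<Longrightarrow> (u has_vector_derivative (A (u t) + f t)) (at t within {0..T})"
    and LA: "\<And>t. t \<in> {0..T} \<Longrightarrow> L (A (u t)) = B (R (u t))"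
    and RV: "\<And>t. t \<in> {0..T} \<Longrightarrow> R (u t) \<in> V"
    and R_err: "\<And>t. t \<in> {0..T} \<Longrightarrow> N (B (R (u t) - L (u t))) \<le> \<epsilon> * nZ (u t)"
    and nZ: "\<And>t. t \<in> {0..T} \<Longrightarrow> nZ (u t) \<le> Mz" "t0 \<in> {0..T}" "nZ (u t0) > 0"
    and U0: "U 0 = L (u 0)" and k: "k > 0" and nT: "real n * k \<le> T"
  shows "N (L (u (real n * k)) - eq_iter B L f c s k (L (u 0)) n)
           \<le> (C * Mz * T + C * local_error_const C MF c s * T) * (k ^ s + \<epsilon>)"
proof -
  have "0 \<le> N (B (R (u t0) - L (u t0)))"
    using RV[OF nZ(2)] by (intro N_nonneg subsetD[OF V_subset_Xh] B_in V_diff L_in)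
  then have "0 \<le> \<epsilon> * nZ (u t0)" using R_err[OF nZ(2)] by linarith
  then have \<epsilon>: "\<epsilon> \<ge> 0" using nZ(3) by (simp add: zero_le_mult_iff)
  have Mz: "Mz \<ge> 0" using nZ by force
  have "N (B (R (u t) - L (u t))) \<le> \<epsilon> * Mz" if "t \<in> {0..T}" for t
    using R_err[OF that] mult_left_mono[OF nZ(1)[OF that] \<epsilon>] by linarith
  then have "N (L (u (real n * k)) - eq_iter B L f c s k (L (u 0)) n)
      \<le> C * (\<epsilon> * Mz) * T + (C * local_error_const C MF c s * T) * k ^ s"
    using full_error_bound[OF u_deriv LA RV _ U0 k nT] by blast
  also have "\<dots> \<le> (C * Mz * T + C * local_error_const C MF c s * T) * (k ^ s + \<epsilon>)"
  proof -
    have "0 \<le> real n * k" using k by simp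
    then have "T \<ge> 0" using nT by linarith
    then have "0 \<le> C * Mz * T * k ^ s" "0 \<le> C * local_error_const C MF c s * T * \<epsilon>"
      using C_nonneg Mz \<epsilon> k local_error_const_nonneg by simp_all
    then show ?thesis by (simp add: algebra_simps)
  qed
  finally show ?thesis .
qed

end

section \<open>Uniformity over the space discretisations\<close>

lemma csubspace_on_imp_subspace:
  assumes "csubspace_on S" shows "subspace S"
  unfolding subspace_def
proof (intro conjI ballI allI)
  show "0 \<in> S" "\<And>x y. x \<in> S \<Longrightarrow> y \<in> S \<Longrightarrow> x + y \<in> S"
    using assms unfolding csubspace_on_def by blast+
  show "c *\<^sub>R x \<in> S" if "x \<in> S" for c x
    using assms that scaleC_of_real[of c x] unfolding csubspace_on_def by metis
qed

lemma clinear_on_add: "clinear_on S f \<Longrightarrow> x \<in> S \<Longrightarrow> y \<in> S \<Longrightarrow> f (x + y) = f x + f y"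
  unfolding clinear_on_def by blast

lemma clinear_on_scaleR:
  assumes "clinear_on S f" "x \<in> S" shows "f (r *\<^sub>R x) = r *\<^sub>R f x"
proof -
  have "f (scaleC (of_real r) x) = scaleC (of_real r) (f x)"
    using assms unfolding clinear_on_def by blast
  then show ?thesis by (simp add: scaleC_of_real)
qed

lemma clinear_on_zero:
  assumes "clinear_on S f" shows "f 0 = 0"
proof -
  have "0 \<in> S" using assms unfolding clinear_on_def csubspace_on_def by blast
  then show ?thesis using clinear_on_scaleR[OF assms, of 0 0] by simp
qed

lemma is_norm_on_triangle: "is_norm_on S N \<Longrightarrow> x \<in> S \<Longrightarrow> y \<in> S \<Longrightarrow> N (x + y) \<le> N x + N y"
  unfolding is_norm_on_def by blast

lemma is_norm_on_scaleR:
  assumes "is_norm_on S N" "x \<in> S" shows "N (r *\<^sub>R x) = \<bar>r\<bar> * N x"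
proof -
  have "N (scaleC (of_real r) x) = cmod (of_real r) * N x"
    using assms unfolding is_norm_on_def by blast
  then show ?thesis by (simp add: scaleC_of_real)
qed

lemma is_norm_on_nonneg: "is_norm_on S N \<Longrightarrow> x \<in> S \<Longrightarrow> N x \<ge> 0"
  unfolding is_norm_on_def by blast

lemma is_norm_on_eq_0: "is_norm_on S N \<Longrightarrow> x \<in> S \<Longrightarrow> N x = 0 \<longleftrightarrow> x = 0"
  unfolding is_norm_on_def by blast

lemma is_norm_on_imp_subspace: "is_norm_on S N \<Longrightarrow> subspace S"
  unfolding is_norm_on_def by (elim conjE) (rule csubspace_on_imp_subspace)

lemma is_norm_on_reverse_triangle:
  assumes N: "is_norm_on S N" and "x \<in> S" "y \<in> S"
  shows "\<bar>N x - N y\<bar> \<le> N (x - y)"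
proof -
  have S: "subspace S" using is_norm_on_imp_subspace[OF N] .
  have "N x \<le> N y + N (x - y)"
    using is_norm_on_triangle[OF N \<open>y \<in> S\<close>, of "x - y"] assms subspace_diff[OF S] by simp
  moreover have "N y \<le> N x + N (x - y)"
    using is_norm_on_triangle[OF N \<open>x \<in> S\<close>, of "y - x"] assms subspace_diff[OF S]
      is_norm_on_scaleR[OF N, of "x - y" "-1"] by simp
  ultimately show ?thesis by linarith
qed

lemma is_norm_on_bounded_on_interval:
  fixes u :: "real \<Rightarrow> 'a::complex_banach"
  assumes N: "is_norm_on Z N" and uZ: "\<And>t. t \<in> {0..T} \<Longrightarrow> u t \<in> Z"
    and cont: "\<forall>t\<in>{0..T}. \<forall>e>0. \<exists>d>0. \<forall>r\<in>{0..T}. \<bar>r - t\<bar> < d \<longrightarrow> N (u r - u t) < e"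
  obtains M where "M \<ge> 0" "\<And>t. t \<in> {0..T} \<Longrightarrow> N (u t) \<le> M"
proof -
  have "continuous_on {0..T} (\<lambda>t. N (u t))"
    unfolding continuous_on_iff
  proof (intro ballI allI impI)
    fix t e assume t: "t \<in> {0..T}" and "(e::real) > 0"
    then obtain d where "d > 0" "\<forall>r\<in>{0..T}. \<bar>r - t\<bar> < d \<longrightarrow> N (u r - u t) < e"
      using cont by blast
    moreover have "dist (N (u r)) (N (u t)) \<le> N (u r - u t)" if "r \<in> {0..T}" for r
      unfolding dist_real_def using that t by (intro is_norm_on_reverse_triangle[OF N] uZ)
    ultimately show "\<exists>d>0. \<forall>r\<in>{0..T}. dist r t < d \<longrightarrow> dist (N (u r)) (N (u t)) < e"
      by (force simp: dist_real_def)
  qed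
  then have "bounded ((\<lambda>t. N (u t)) ` {0..T})"
    by (intro compact_imp_bounded compact_continuous_image) auto
  then obtain M where "\<And>t. t \<in> {0..T} \<Longrightarrow> \<bar>N (u t)\<bar> \<le> M" unfolding bounded_real by blast
  then show ?thesis using that[of "max M 0"] by fastforce
qed

lemma Ck_on_obtain_bounded_derivatives:
  assumes "Ck_on s T f" "T \<ge> 0"
  obtains F MF where "\<And>t. t \<in> {0..T} \<Longrightarrow> F 0 t = f t"
    "\<And>j t. j < s \<Longrightarrow> t \<in> {0..T} \<Longrightarrow> (F j has_vector_derivative F (Suc j) t) (at t within {0..T})"
    "\<And>t. t \<in> {0..T} \<Longrightarrow> norm (F s t) \<le> MF" "MF \<ge> 0"
proof -
  obtain F where F: "\<forall>t\<in>{0..T}. F 0 t = f t"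
    "\<forall>j<s. \<forall>t\<in>{0..T}. (F j has_vector_derivative F (Suc j) t) (at t within {0..T})"
    and "continuous_on {0..T} (F s)"
    using assms(1) unfolding Ck_on_def by blast
  then have "continuous_on {0..T} (\<lambda>t. norm (F s t))" by (intro continuous_intros)
  then obtain t0 where "\<forall>t\<in>{0..T}. norm (F s t) \<le> norm (F s t0)"
    using continuous_attains_sup[of "{0..T}" "\<lambda>t. norm (F s t)"] assms(2) by auto
  then show ?thesis using that[of F "norm (F s t0)"] F by auto
qed

lemma solution_zero_imp_forcing_zero:
  assumes T: "T > 0" and A0: "A 0 = 0" and u0: "\<And>t. t \<in> {0..T} \<Longrightarrow> u t = 0"
    and u_deriv: "\<And>t. t \<in> {0..T} \<Longrightarrow> (u has_vector_derivative (A (u t) + f t)) (at t within {0..T})"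
    and t: "t \<in> {0..T}"
  shows "f t = 0"
proof -
  have "(u has_vector_derivative 0) (at t within {0..T})"
    by (rule has_vector_derivative_transform_within[OF has_vector_derivative_const zero_less_one t])
      (simp add: u0)
  then have "A (u t) + f t = 0"
    using vector_derivative_unique_within_closed_interval[of 0 T t u "A (u t) + f t" 0] u_deriv[OF t] T t
    by simp
  then show ?thesis using u0[OF t] A0 by simp
qed

lemma exponential_quadrature_instance:
  fixes X0 Xh :: "'x::complex_banach set" and B L :: "'x \<Rightarrow> 'x" and N :: "'x \<Rightarrow> real"
    and U f :: "real \<Rightarrow> 'x" and F :: "nat \<Rightarrow> real \<Rightarrow> 'x"
  assumes Xh: "csubspace_on Xh" "finite B0" "Xh \<subseteq> span B0" and N: "is_norm_on Xh N"
    and X0: "csubspace_on X0" "X0 \<subseteq> Xh" and B: "clinear_on X0 B" "B ` X0 \<subseteq> X0"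
    and L: "bounded_linear L" "range L \<subseteq> X0"
    and "C \<ge> 0" "\<And>t x. t \<ge> 0 \<Longrightarrow> x \<in> X0 \<Longrightarrow> N (opexp B t x) \<le> C * N x"
    and "\<And>x. N (L x) \<le> C * norm x"
    and "\<And>t. t \<in> {0..T} \<Longrightarrow> U t \<in> X0"
    and "\<And>t. t \<in> {0..T} \<Longrightarrow> (U has_vector_derivative (B (U t) + L (f t))) (at t within {0..T})"
    and "s \<ge> 1"
    and "\<And>j t. j < s \<Longrightarrow> t \<in> {0..T} \<Longrightarrow> (F j has_vector_derivative F (Suc j) t) (at t within {0..T})"
    and "\<And>t. t \<in> {0..T} \<Longrightarrow> F 0 t = f t"
    and "\<And>t. t \<in> {0..T} \<Longrightarrow> norm (F s t) \<le> MF" "MF \<ge> 0"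
    and "inj_on c {1..s}" "c ` {1..s} \<subseteq> {0..1}"
  obtains K c' where "exponential_quadrature X0 B K Xh N L C c' U f T s c F MF"
proof -
  have X0_subspace: "subspace X0" and Xh_subspace: "subspace Xh"
    using X0(1) Xh(1) by (auto intro: csubspace_on_imp_subspace)
  have X0_span: "X0 \<subseteq> span B0" using X0(2) Xh(3) by blast
  obtain K where K: "K \<ge> 0" "\<forall>x\<in>X0. norm (B x) \<le> K * norm x"
    using finite_dim_linear_bound[OF X0_subspace Xh(2) X0_span, of B]
      clinear_on_add[OF B(1)] clinear_on_scaleR[OF B(1)] by blast
  obtain c' where c': "\<forall>x\<in>Xh. N x \<le> c' * norm x"
    using finite_dim_subadditive_bound[OF Xh_subspace Xh(2,3), of N]
      is_norm_on_triangle[OF N] is_norm_on_scaleR[OF N] by blast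
  have "exponential_quadrature X0 B K Xh N L C c' U f T s c F MF"
  proof (intro exponential_quadrature.intro bounded_invariant_op.intro exponential_quadrature_axioms.intro)
    show "closed X0" "closed Xh"
      using closed_finite_dim_subspace X0_subspace Xh_subspace Xh(2,3) X0_span by blast+
    show "\<And>x y. x \<in> X0 \<Longrightarrow> y \<in> X0 \<Longrightarrow> B (x + y) = B x + B y" using clinear_on_add[OF B(1)] .
    show "\<And>r x. x \<in> X0 \<Longrightarrow> B (r *\<^sub>R x) = r *\<^sub>R B x" using clinear_on_scaleR[OF B(1)] .
    show "\<And>x y. x \<in> Xh \<Longrightarrow> y \<in> Xh \<Longrightarrow> N (x + y) \<le> N x + N y" using is_norm_on_triangle[OF N] .
    show "\<And>r x. x \<in> Xh \<Longrightarrow> N (r *\<^sub>R x) = \<bar>r\<bar> * N x" using is_norm_on_scaleR[OF N] .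
    show "\<And>x. x \<in> Xh \<Longrightarrow> 0 \<le> N x" using is_norm_on_nonneg[OF N] .
  qed (use assms K c' X0_subspace Xh_subspace in auto)
  then show ?thesis by (rule that)
qed

lemma exponential_quadrature_family:
  fixes Xh Vh :: "real \<Rightarrow> 'x::complex_banach set" and A0h Lh :: "real \<Rightarrow> 'x \<Rightarrow> 'x"
  assumes Xh_fin: "\<forall>h\<in>H. csubspace_on (Xh h) \<and> (\<exists>B. finite B \<and> Xh h \<subseteq> span B)"
    and normh_norm: "\<forall>h\<in>H. is_norm_on (Xh h) (normh h)"
    and X0_sub: "\<forall>h\<in>H. csubspace_on (Vh h) \<and> Vh h \<subseteq> Xh h"
    and A0h_lin: "\<forall>h\<in>H. clinear_on (Vh h) (A0h h) \<and> A0h h ` Vh h \<subseteq> Vh h"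
    and Lh: "\<forall>h\<in>H. clinear_on UNIV (Lh h) \<and> bounded_linear (Lh h) \<and> range (Lh h) \<subseteq> Vh h
                      \<and> (\<forall>x. Lh h (Lh h x) = Lh h x)"
    and bounds: "\<exists>C. \<forall>h\<in>H. (\<forall>t\<ge>0. \<forall>x\<in>Vh h. normh h (opexp (A0h h) t x) \<le> C * normh h x)
        \<and> (\<forall>x. normh h (Lh h x) \<le> C * norm x) \<and> (\<forall>y. normh h (Lh h (Qh h y)) \<le> C * norm y)"
    and quad: "s \<ge> 1" "inj_on c {1..s}" "c ` {1..s} \<subseteq> {0..1}"
    and T_pos: "T > 0" and f_smooth: "Ck_on s T f"
    and Uh_sol: "\<forall>h\<in>H. Uh h 0 = Lh h (u 0) \<and> (\<forall>t\<in>{0..T}. Uh h t \<in> Vh h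
        \<and> (Uh h has_vector_derivative (A0h h (Uh h t) + Lh h (f t))) (at t within {0..T}))"
  obtains C F MF K c' where "\<And>h. h \<in> H \<Longrightarrow>
    exponential_quadrature (Vh h) (A0h h) (K h) (Xh h) (normh h) (Lh h) C (c' h) (Uh h) f T s c F MF"
proof -
  obtain C0 where C0: "\<forall>h\<in>H. (\<forall>t\<ge>0. \<forall>x\<in>Vh h. normh h (opexp (A0h h) t x) \<le> C0 * normh h x)
        \<and> (\<forall>x. normh h (Lh h x) \<le> C0 * norm x)" using bounds by blast
  define C where "C = max C0 0"
  obtain F MF where F: "\<And>t. t \<in> {0..T} \<Longrightarrow> F 0 t = f t"
    "\<And>j t. j < s \<Longrightarrow> t \<in> {0..T} \<Longrightarrow> (F j has_vector_derivative F (Suc j) t) (at t within {0..T})"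
    "\<And>t. t \<in> {0..T} \<Longrightarrow> norm (F s t) \<le> MF" "MF \<ge> 0"
    using Ck_on_obtain_bounded_derivatives[OF f_smooth] T_pos by auto
  have "\<exists>K c'. exponential_quadrature (Vh h) (A0h h) K (Xh h) (normh h) (Lh h) C c' (Uh h) f T s c F MF"
    if h: "h \<in> H" for h
  proof -
    obtain B0 where B0: "finite B0" "Xh h \<subseteq> span B0" using Xh_fin h by blast
    have hyps: "csubspace_on (Xh h)" "csubspace_on (Vh h)" "Vh h \<subseteq> Xh h"
      "clinear_on (Vh h) (A0h h)" "A0h h ` Vh h \<subseteq> Vh h" "bounded_linear (Lh h)" "range (Lh h) \<subseteq> Vh h"
      using Xh_fin X0_sub A0h_lin Lh h by auto
    have U: "\<And>t. t \<in> {0..T} \<Longrightarrow> Uh h t \<in> Vh h"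
      "\<And>t. t \<in> {0..T} \<Longrightarrow> (Uh h has_vector_derivative (A0h h (Uh h t) + Lh h (f t))) (at t within {0..T})"
      using Uh_sol h by auto
    have C_nonneg: "C \<ge> 0" by (simp add: C_def)
    have "C0 * normh h x \<le> C * normh h x" if "x \<in> Vh h" for x
      unfolding C_def using that hyps(3) is_norm_on_nonneg[OF normh_norm[rule_format, OF h]]
      by (intro mult_right_mono) auto
    then have EB: "normh h (opexp (A0h h) t x) \<le> C * normh h x" if "t \<ge> 0" "x \<in> Vh h" for t x
      using C0 h that by (meson order_trans)
    have "C0 * norm x \<le> C * norm x" for x :: 'x unfolding C_def by (intro mult_right_mono) auto
    then have LB: "normh h (Lh h x) \<le> C * norm x" for x using C0 h by (meson order_trans)
    obtain K c' where "exponential_quadrature (Vh h) (A0h h) K (Xh h) (normh h) (Lh h) C c' (Uh h) f T s c F MF"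
      by (rule exponential_quadrature_instance[OF hyps(1) B0 normh_norm[rule_format, OF h] hyps(2-7)
            C_nonneg EB LB U quad(1) F(2,1,3,4) quad(2,3)])
    then show ?thesis by blast
  qed
  then obtain K c' where inst: "\<And>h. h \<in> H \<Longrightarrow>
      exponential_quadrature (Vh h) (A0h h) (K h) (Xh h) (normh h) (Lh h) C (c' h) (Uh h) f T s c F MF"
    by metis
  show ?thesis by (rule that[OF inst])
qed

lemma elliptic_projection_defect:
  assumes Rh_ell: "\<forall>h\<in>H. \<forall>w\<in>D. Rh h w \<in> Vh h
                      \<and> A0h h (Rh h w) + Ah h (Qh h (bd w)) = Lh h (A w)"
    and Rh_est: "\<forall>h\<in>H. \<forall>v\<in>Z \<inter> D.
        normh h (A0h h (Rh h v - (Lh h v - Lh h (Qh h (bd v))))) \<le> eps h * normZ v"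
    and Ah_lin: "clinear_on (Xh h) (Ah h)" and Qh_lin: "clinear_on UNIV (Qh h)"
    and L: "bounded_linear (Lh h)" and h: "h \<in> H" and w: "w \<in> Z" "w \<in> D" "bd w = 0"
  shows "Rh h w \<in> Vh h" "Lh h (A w) = A0h h (Rh h w)"
    "normh h (A0h h (Rh h w - Lh h w)) \<le> eps h * normZ w"
proof -
  have zero: "Qh h 0 = 0" "Ah h 0 = 0" "Lh h 0 = 0"
    using clinear_on_zero[OF Qh_lin] clinear_on_zero[OF Ah_lin] linear_0[OF bounded_linear.linear[OF L]]
    by auto
  have "Rh h w \<in> Vh h" and "A0h h (Rh h w) + Ah h (Qh h (bd w)) = Lh h (A w)"
    using Rh_ell h w(2) by blast+
  then show "Rh h w \<in> Vh h" "Lh h (A w) = A0h h (Rh h w)" using w zero by auto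
  show "normh h (A0h h (Rh h w - Lh h w)) \<le> eps h * normZ w"
    using Rh_est[rule_format, OF h, of w] w zero by simp
qed

text \<open>\<open>eps h\<close> may be negative only if u vanishes identically; then f and all errors vanish too.\<close>
lemma projected_error_uniform:
  fixes Vh :: "real \<Rightarrow> 'x::complex_banach set" and A :: "'x \<Rightarrow> 'x" and u :: "real \<Rightarrow> 'x"
  assumes inst: "\<And>h. h \<in> H \<Longrightarrow>
      exponential_quadrature (Vh h) (A0h h) (K h) (Xh h) (normh h) (Lh h) C (c' h) (Uh h) f T s c F MF"
    and standing: "standing_assumptions A D bd \<omega>"
    and Ah_lin: "\<forall>h\<in>H. clinear_on (Xh h) (Ah h)"
    and Qh_lin: "\<forall>h\<in>H. clinear_on UNIV (Qh h) \<and> range (Qh h) \<subseteq> Xh h"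
    and Rh_ell: "\<forall>h\<in>H. \<forall>w\<in>D. Rh h w \<in> Vh h
                      \<and> A0h h (Rh h w) + Ah h (Qh h (bd w)) = Lh h (A w)"
    and Z_norm: "is_norm_on Z normZ"
    and Rh_est: "\<forall>h\<in>H. \<forall>v\<in>Z \<inter> D.
        normh h (A0h h (Rh h v - (Lh h v - Lh h (Qh h (bd v))))) \<le> eps h * normZ v"
    and T_pos: "T > 0"
    and u_sol: "\<forall>t\<in>{0..T}. u t \<in> D \<and> bd (u t) = 0
                   \<and> (u has_vector_derivative (A (u t) + f t)) (at t within {0..T})"
    and u_Z: "\<forall>t\<in>{0..T}. u t \<in> Z"
    and u_Z_cont: "\<forall>t\<in>{0..T}. \<forall>e>0. \<exists>d>0. \<forall>r\<in>{0..T}. \<bar>r - t\<bar> < d \<longrightarrow> normZ (u r - u t) < e"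
    and Uh_sol: "\<forall>h\<in>H. Uh h 0 = Lh h (u 0) \<and> (\<forall>t\<in>{0..T}. Uh h t \<in> Vh h
                   \<and> (Uh h has_vector_derivative (A0h h (Uh h t) + Lh h (f t))) (at t within {0..T}))"
  shows "\<exists>C'. \<forall>h\<in>H. \<forall>k>0. \<forall>n. real n * k \<le> T \<longrightarrow>
      normh h (Lh h (u (real n * k)) - eq_iter (A0h h) (Lh h) f c s k (Lh h (u 0)) n) \<le> C' * (k ^ s + eps h)"
proof (cases "\<forall>t\<in>{0..T}. u t = 0")
  case True
  have "clinear_on D A" using standing unfolding standing_assumptions_def by blast
  then have "A 0 = 0" by (rule clinear_on_zero)
  moreover have "\<And>t. t \<in> {0..T} \<Longrightarrow> (u has_vector_derivative (A (u t) + f t)) (at t within {0..T})"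
    using u_sol by blast
  ultimately have "f t = 0" if "t \<in> {0..T}" for t
    using True solution_zero_imp_forcing_zero[OF T_pos, of A u f t] that by blast
  then have "eq_iter (A0h h) (Lh h) f c s k 0 n = 0" if "h \<in> H" "k > 0" "real n * k \<le> T" for h k n
    using exponential_quadrature.eq_iter_zero_forcing[OF inst[OF that(1)] _ that(2,3)] by blast
  moreover have "Lh h 0 = 0" "normh h 0 = 0" if "h \<in> H" for h
    using exponential_quadrature.L_linear[OF inst[OF that]] exponential_quadrature.N_zero[OF inst[OF that]]
    by (auto simp: linear_0)
  ultimately show ?thesis using True T_pos by (intro exI[of _ 0]) auto
next
  case False
  then obtain t0 where t0: "t0 \<in> {0..T}" "u t0 \<noteq> 0" by blast
  obtain Mz where Mz: "\<And>t. t \<in> {0..T} \<Longrightarrow> normZ (u t) \<le> Mz"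
    using is_norm_on_bounded_on_interval[OF Z_norm _ u_Z_cont] u_Z by blast
  have ut: "u t \<in> Z" "u t \<in> D" "bd (u t) = 0" if "t \<in> {0..T}" for t
    using u_Z u_sol that by auto
  have "normZ (u t0) > 0"
    using is_norm_on_nonneg[OF Z_norm ut(1)] is_norm_on_eq_0[OF Z_norm ut(1)] t0 by (simp add: order_less_le)
  moreover have "clinear_on (Xh h) (Ah h)" "clinear_on UNIV (Qh h)" if "h \<in> H" for h
    using Ah_lin Qh_lin that by auto
  ultimately have "normh h (Lh h (u (real n * k)) - eq_iter (A0h h) (Lh h) f c s k (Lh h (u 0)) n)
      \<le> (C * Mz * T + C * local_error_const C MF c s * T) * (k ^ s + eps h)"
    if h: "h \<in> H" "k > 0" "real n * k \<le> T" for h k n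
    using elliptic_projection_defect[where Vh=Vh and A0h=A0h and Ah=Ah and Qh=Qh and bd=bd
          and Lh=Lh and A=A and Rh=Rh and normh=normh and normZ=normZ and eps=eps and Xh=Xh,
          OF Rh_ell Rh_est _ _ exponential_quadrature.L_bounded_linear[OF inst[OF h(1)]] h(1) ut]
      u_sol Uh_sol h t0 Mz
    by (intro exponential_quadrature.projected_error_bound[OF inst[OF h(1)], where A=A and R="Rh h"]) auto
  then show ?thesis by blast
qed

theorem theorem1:
  fixes A :: "'x::complex_banach \<Rightarrow> 'x"
    and D :: "'x set"
    and bd :: "'x \<Rightarrow> 'y::complex_banach"
    and \<omega> :: real
    and H :: "real set"
    and Xh X0 :: "real \<Rightarrow> 'x set"
    and normh :: "real \<Rightarrow> 'x \<Rightarrow> real"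
    and A0h Ah Lh Rh :: "real \<Rightarrow> 'x \<Rightarrow> 'x"
    and Qh :: "real \<Rightarrow> 'y \<Rightarrow> 'x"
    and Z :: "'x set" and normZ :: "'x \<Rightarrow> real"
    and eps :: "real \<Rightarrow> real"
    and T :: real and s :: nat and c :: "nat \<Rightarrow> real"
    and u f :: "real \<Rightarrow> 'x"
    and Uh :: "real \<Rightarrow> real \<Rightarrow> 'x"
  assumes standing: "standing_assumptions A D bd \<omega>"
    \<comment> \<open>space discretization\<close>
    and H_pos: "H \<subseteq> {0<..}" and H_lim: "0 islimpt H"
    and Xh_fin: "\<forall>h\<in>H. csubspace_on (Xh h) \<and> (\<exists>B. finite B \<and> Xh h \<subseteq> span B)"
    and normh_norm: "\<forall>h\<in>H. is_norm_on (Xh h) (normh h)"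
    and X0_sub: "\<forall>h\<in>H. csubspace_on (X0 h) \<and> X0 h \<subseteq> Xh h"
    and A0h_lin: "\<forall>h\<in>H. clinear_on (X0 h) (A0h h) \<and> A0h h ` X0 h \<subseteq> X0 h"
    and Ah_lin: "\<forall>h\<in>H. clinear_on (Xh h) (Ah h)"
    and Lh_proj: "\<forall>h\<in>H. clinear_on UNIV (Lh h) \<and> bounded_linear (Lh h) \<and> range (Lh h) \<subseteq> X0 h
                      \<and> (\<forall>x. Lh h (Lh h x) = Lh h x)"
    and Qh_lin: "\<forall>h\<in>H. clinear_on UNIV (Qh h) \<and> range (Qh h) \<subseteq> Xh h"
    and Rh_ell: "\<forall>h\<in>H. \<forall>w\<in>D. Rh h w \<in> X0 h
                      \<and> A0h h (Rh h w) + Ah h (Qh h (bd w)) = Lh h (A w)"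
    and Z_norm: "is_norm_on Z normZ"
    and eps_mono: "mono_on H eps"
    and Rh_est: "\<forall>h\<in>H. \<forall>v\<in>Z \<inter> D.
        normh h (A0h h (Rh h v - (Lh h v - Lh h (Qh h (bd v))))) \<le> eps h * normZ v"
    and unif_bounds: "\<exists>C. \<forall>h\<in>H.
          (\<forall>t\<ge>0. \<forall>x\<in>X0 h. normh h (opexp (A0h h) t x) \<le> C * normh h x)
        \<and> (\<forall>x. normh h (Lh h x) \<le> C * norm x)
        \<and> (\<forall>y. normh h (Lh h (Qh h y)) \<le> C * norm y)"
    \<comment> \<open>the quadrature nodes\<close>
    and s_pos: "s \<ge> 1"
    and c_inj: "inj_on c {1..s}" and c_range: "c ` {1..s} \<subseteq> {0..1}"
    \<comment> \<open>the continuous problem with g = 0 and its solution u\<close>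
    and T_pos: "T > 0"
    and f_smooth: "Ck_on s T f"
    and u_sol: "\<forall>t\<in>{0..T}. u t \<in> D \<and> bd (u t) = 0
                   \<and> (u has_vector_derivative (A (u t) + f t)) (at t within {0..T})"
    and u_Z: "\<forall>t\<in>{0..T}. u t \<in> Z"
    and u_Z_cont: "\<forall>t\<in>{0..T}. \<forall>e>0. \<exists>d>0. \<forall>r\<in>{0..T}. \<bar>r - t\<bar> < d \<longrightarrow> normZ (u r - u t) < e"
    \<comment> \<open>the semidiscrete solution\<close>
    and Uh_sol: "\<forall>h\<in>H. Uh h 0 = Lh h (u 0) \<and> (\<forall>t\<in>{0..T}. Uh h t \<in> X0 h
                   \<and> (Uh h has_vector_derivative (A0h h (Uh h t) + Lh h (f t))) (at t within {0..T}))"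
  shows
    "(\<exists>C. \<forall>h\<in>H. \<forall>k>0. \<forall>n. real (Suc n) * k \<le> T \<longrightarrow>
        normh h (Uh h (real (Suc n) * k)
                 - eq_step (A0h h) (Lh h) f c s k (real n * k) (Uh h (real n * k))) \<le> C * k ^ (s + 1))
   \<and> (\<exists>C. \<forall>h\<in>H. \<forall>k>0. \<forall>n. real n * k \<le> T \<longrightarrow>
        normh h (Uh h (real n * k) - eq_iter (A0h h) (Lh h) f c s k (Lh h (u 0)) n) \<le> C * k ^ s)
   \<and> (\<exists>C. \<forall>h\<in>H. \<forall>k>0. \<forall>n. real n * k \<le> T \<longrightarrow>
        normh h (Lh h (u (real n * k)) - eq_iter (A0h h) (Lh h) f c s k (Lh h (u 0)) n)
          \<le> C * (k ^ s + eps h))"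
proof -
  obtain C F MF K c' where inst: "\<And>h. h \<in> H \<Longrightarrow>
      exponential_quadrature (X0 h) (A0h h) (K h) (Xh h) (normh h) (Lh h) C (c' h) (Uh h) f T s c F MF"
    by (rule exponential_quadrature_family[where H=H and Xh=Xh and Vh=X0 and normh=normh and A0h=A0h
          and Lh=Lh and Qh=Qh and Uh=Uh and u=u,
          OF Xh_fin normh_norm X0_sub A0h_lin Lh_proj unif_bounds s_pos c_inj c_range T_pos f_smooth Uh_sol]) blast
  define Cloc where "Cloc = local_error_const C MF c s"
  have local: "normh h (Uh h (real (Suc n) * k) - eq_step (A0h h) (Lh h) f c s k (real n * k) (Uh h (real n * k)))
      \<le> Cloc * k ^ (s + 1)" if "h \<in> H" "k > 0" "real (Suc n) * k \<le> T" for h k n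
    using exponential_quadrature.local_error_bound[OF inst[OF that(1)] that(2), of "real n * k"] that
    by (simp add: Cloc_def algebra_simps)
  have global: "normh h (Uh h (real n * k) - eq_iter (A0h h) (Lh h) f c s k (Lh h (u 0)) n)
      \<le> (C * Cloc * T) * k ^ s" if "h \<in> H" "k > 0" "real n * k \<le> T" for h k n
    using exponential_quadrature.global_error_bound[OF inst[OF that(1)] that(2,3)] Uh_sol that(1)
    by (simp add: Cloc_def)
  have projected: "\<exists>C'. \<forall>h\<in>H. \<forall>k>0. \<forall>n. real n * k \<le> T \<longrightarrow>
      normh h (Lh h (u (real n * k)) - eq_iter (A0h h) (Lh h) f c s k (Lh h (u 0)) n) \<le> C' * (k ^ s + eps h)"
    by (rule projected_error_uniform[where Vh=X0 and Xh=Xh and A0h=A0h and Lh=Lh and normh=normh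
          and Uh=Uh and Ah=Ah and Qh=Qh and Rh=Rh and A=A and bd=bd and normZ=normZ and eps=eps,
          OF inst standing Ah_lin Qh_lin Rh_ell Z_norm Rh_est T_pos u_sol u_Z u_Z_cont Uh_sol])
  show ?thesis using local global projected by blast
qed

end
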